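(* Let $D_1$ be a full $K$-powered field and let $D_2$ and $D_3$ be powers-algebraic extensions of $D_1$. Then the free amalgam $D_4$ of $D_2$ and $D_3$ over $D_1$ is a powers-algebraic extension of $D_1$.
   Context: $K$ is a field of characteristic $0$. A partial $K$-powered field is $(D,V,\exp,F)$: $V$ a $K$-vector space, $D\subseteq V$ a $\mathbb{Q}$-subspace with $\langle D\rangle_K=V$, $F$ a field of characteristic 0, $\exp:(D,+)\to(F^\times,\cdot)$ a homomorphism whose image generates $F$. It is a full $K$-powered field if $D=V$, $\exp$ is surjective onto $F^\times$ and $F$ is algebraically closed. Extensions $D_1\le D_2$: $K$-linear embedding $V_1\to V_2$ mapping $D_1$ into $D_2$ and field embedding $F_1\to F_2$ commuting with $\exp$; kernel-preserving if $\ker\exp$ does not grow. Predimension $\delta(A/B)=\mathrm{ldim}_K(A/B)+\mathrm{td}(\exp(A)/\exp(B))-\mathrm{ldim}_\mathbb{Q}(A/B)$ for $\mathrm{ldim}_\mathbb{Q}(A/B)<\infty$ ($\mathrm{ldim}_K(A/B)=\dim_K\langle A\cup B\rangle_K/\langle B\rangle_K$, similarly over $\mathbb{Q}$; td is transcendence degree). $D_1\triangleleft D_2$ (strong): kernel-preserving and $\delta(z/D_1)\ge0$ for all finite tuples $z$ in $D_2$. A strong extension $D_1\triangleleft D_2$ is powers-algebraic if every finite tuple $z$ in $D_2$ extends to a finite tuple $z'$ in $D_2$ with $\delta(z'/D_1)=0$. Free amalgam of $D_2,D_3$ over the full $D_1$: $V_4=V_2\oplus_{V_1}V_3$, $D_4=D_2+D_3$,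 $F_4$ the compositum of $F_2,F_3$ with $F_2,F_3$ linearly disjoint over $F_1$, $\exp(z_2+z_3)=\exp(z_2)\exp(z_3)$. *)

theory Defs
  imports Main "HOL-Computational_Algebra.Polynomial"
begin

text \<open>All K-vector spaces considered
live inside one ambient K-vector space 'v with scalar multiplication scale (an
assumption vector_space scale), all fields F live inside one ambient field 'f of
characteristic 0, and there is one ambient map ex :: 'v => 'f. A partial K-powered field
is then a triple (V, D, F) of subsets; extensions are inclusions (the K-linear and field
embeddings being the identity and commuting with ex automatically).\<close>

definition qscale :: "('k::field_char_0 \<Rightarrow> 'v \<Rightarrow> 'v) \<Rightarrow> rat \<Rightarrow> 'v \<Rightarrow> 'v" where
  "qscale scale q x = scale (of_rat q) x"

definition subfield :: "'f::field set \<Rightarrow> bool" where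
  "subfield F \<longleftrightarrow> 0 \<in> F \<and> 1 \<in> F \<and>
     (\<forall>x\<in>F. \<forall>y\<in>F. x + y \<in> F \<and> x * y \<in> F) \<and>
     (\<forall>x\<in>F. - x \<in> F) \<and> (\<forall>x\<in>F. x \<noteq> 0 \<longrightarrow> inverse x \<in> F)"

definition gen_field :: "'f::field set \<Rightarrow> 'f set" where
  "gen_field S = \<Inter> {F. subfield F \<and> S \<subseteq> F}"

definition algebraic_over :: "'f::field set \<Rightarrow> 'f \<Rightarrow> bool" where
  "algebraic_over L a \<longleftrightarrow> (\<exists>p. p \<noteq> 0 \<and> (\<forall>i. coeff p i \<in> L) \<and> poly p a = 0)"

definition alg_closed_field :: "'f::field set \<Rightarrow> bool" where
  "alg_closed_field F \<longleftrightarrow> subfield F \<and>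
     (\<forall>p. (\<forall>i. coeff p i \<in> F) \<and> degree p > 0 \<longrightarrow> (\<exists>x\<in>F. poly p x = 0))"

definition lin_indep_over :: "'f::field set \<Rightarrow> 'f set \<Rightarrow> bool" where
  "lin_indep_over L T \<longleftrightarrow>
     (\<forall>S c. finite S \<longrightarrow> S \<subseteq> T \<longrightarrow> (\<forall>t\<in>S. c t \<in> L) \<longrightarrow> (\<Sum>t\<in>S. c t * t) = 0
        \<longrightarrow> (\<forall>t\<in>S. c t = 0))"

definition linearly_disjoint :: "'f::field set \<Rightarrow> 'f set \<Rightarrow> 'f set \<Rightarrow> bool" where
  "linearly_disjoint F1 F2 F3 \<longleftrightarrow>
     (\<forall>T. finite T \<longrightarrow> T \<subseteq> F2 \<longrightarrow> lin_indep_over F1 T \<longrightarrow> lin_indep_over F3 T)"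

text \<open>ldim_K(A/B) = dim_K (span(A \<union> B) / span B): the least size of a finite C \<subseteq> A with
A \<subseteq> span (C \<union> B).\<close>
definition ldim :: "('s::comm_ring_1 \<Rightarrow> 'v::ab_group_add \<Rightarrow> 'v) \<Rightarrow> 'v set \<Rightarrow> 'v set \<Rightarrow> nat" where
  "ldim sc A B = (LEAST n. \<exists>C. C \<subseteq> A \<and> finite C \<and> card C = n \<and> A \<subseteq> module.span sc (C \<union> B))"

text \<open>td(A/B): transcendence degree of the field generated by A \<union> B over the field
generated by B, as the size of a least C \<subseteq> A over which (together with B) A is algebraic.\<close>
definition tdeg :: "'f::field set \<Rightarrow> 'f set \<Rightarrow> nat" where
  "tdeg A B = (LEAST n. \<exists>C. C \<subseteq> A \<and> finite C \<and> card C = n \<and>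
                   (\<forall>a\<in>A. algebraic_over (gen_field (B \<union> C)) a))"

definition predim :: "('k::field_char_0 \<Rightarrow> 'v::ab_group_add \<Rightarrow> 'v) \<Rightarrow> ('v \<Rightarrow> 'f::field)
    \<Rightarrow> 'v set \<Rightarrow> 'v set \<Rightarrow> int" where
  "predim scale ex A B = int (ldim scale A B) + int (tdeg (ex ` A) (ex ` B))
                          - int (ldim (qscale scale) A B)"

definition pkpf :: "('k::field_char_0 \<Rightarrow> 'v::ab_group_add \<Rightarrow> 'v) \<Rightarrow> ('v \<Rightarrow> 'f::field_char_0)
    \<Rightarrow> 'v set \<Rightarrow> 'v set \<Rightarrow> 'f set \<Rightarrow> bool" where
  "pkpf scale ex V D F \<longleftrightarrow>
     module.subspace scale V \<and>
     D \<subseteq> V \<and> module.subspace (qscale scale) D \<and>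
     module.span scale D = V \<and>
     subfield F \<and>
     (\<forall>x\<in>D. ex x \<in> F \<and> ex x \<noteq> 0) \<and>
     (\<forall>x\<in>D. \<forall>y\<in>D. ex (x + y) = ex x * ex y) \<and>
     gen_field (ex ` D) = F"

definition full_kpf :: "('k::field_char_0 \<Rightarrow> 'v::ab_group_add \<Rightarrow> 'v) \<Rightarrow> ('v \<Rightarrow> 'f::field_char_0)
    \<Rightarrow> 'v set \<Rightarrow> 'v set \<Rightarrow> 'f set \<Rightarrow> bool" where
  "full_kpf scale ex V D F \<longleftrightarrow>
     pkpf scale ex V D F \<and> D = V \<and> ex ` D = F - {0} \<and> alg_closed_field F"

definition kpf_ext :: "('k::field_char_0 \<Rightarrow> 'v::ab_group_add \<Rightarrow> 'v) \<Rightarrow> ('v \<Rightarrow> 'f::field_char_0)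
    \<Rightarrow> 'v set \<Rightarrow> 'v set \<Rightarrow> 'f set \<Rightarrow> 'v set \<Rightarrow> 'v set \<Rightarrow> 'f set \<Rightarrow> bool" where
  "kpf_ext scale ex V1 D1 F1 V2 D2 F2 \<longleftrightarrow>
     pkpf scale ex V1 D1 F1 \<and> pkpf scale ex V2 D2 F2 \<and>
     V1 \<subseteq> V2 \<and> D1 \<subseteq> D2 \<and> F1 \<subseteq> F2"

definition kernel_preserving :: "('v \<Rightarrow> 'f::field) \<Rightarrow> 'v set \<Rightarrow> 'v set \<Rightarrow> bool" where
  "kernel_preserving ex D1 D2 \<longleftrightarrow> {x\<in>D2. ex x = 1} \<subseteq> D1"

definition strong_ext :: "('k::field_char_0 \<Rightarrow> 'v::ab_group_add \<Rightarrow> 'v) \<Rightarrow> ('v \<Rightarrow> 'f::field_char_0)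
    \<Rightarrow> 'v set \<Rightarrow> 'v set \<Rightarrow> 'f set \<Rightarrow> 'v set \<Rightarrow> 'v set \<Rightarrow> 'f set \<Rightarrow> bool" where
  "strong_ext scale ex V1 D1 F1 V2 D2 F2 \<longleftrightarrow>
     kpf_ext scale ex V1 D1 F1 V2 D2 F2 \<and> kernel_preserving ex D1 D2 \<and>
     (\<forall>z::'v list. set z \<subseteq> D2 \<longrightarrow> predim scale ex (set z) D1 \<ge> 0)"

definition powers_algebraic_ext :: "('k::field_char_0 \<Rightarrow> 'v::ab_group_add \<Rightarrow> 'v) \<Rightarrow> ('v \<Rightarrow> 'f::field_char_0)
    \<Rightarrow> 'v set \<Rightarrow> 'v set \<Rightarrow> 'f set \<Rightarrow> 'v set \<Rightarrow> 'v set \<Rightarrow> 'f set \<Rightarrow> bool" where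
  "powers_algebraic_ext scale ex V1 D1 F1 V2 D2 F2 \<longleftrightarrow>
     strong_ext scale ex V1 D1 F1 V2 D2 F2 \<and>
     (\<forall>z::'v list. set z \<subseteq> D2 \<longrightarrow>
        (\<exists>w. set w \<subseteq> D2 \<and> predim scale ex (set (z @ w)) D1 = 0))"

definition setsum :: "'v::ab_group_add set \<Rightarrow> 'v set \<Rightarrow> 'v set" where
  "setsum A B = {a + b | a b. a \<in> A \<and> b \<in> B}"

text \<open>(V4,D4,F4) is the free amalgam of (V2,D2,F2) and (V3,D3,F3) over (V1,D1,F1):
V4 = V2 \<oplus>_V1 V3 (internal sum with V2 \<inter> V3 = V1), D4 = D2 + D3, F4 the compositum
of F2 and F3 with F2, F3 linearly disjoint over F1, and ex(z2+z3) = ex z2 * ex z3.\<close>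
definition free_amalgam :: "('k::field_char_0 \<Rightarrow> 'v::ab_group_add \<Rightarrow> 'v) \<Rightarrow> ('v \<Rightarrow> 'f::field_char_0)
    \<Rightarrow> 'v set \<Rightarrow> 'v set \<Rightarrow> 'f set \<Rightarrow> 'v set \<Rightarrow> 'v set \<Rightarrow> 'f set
    \<Rightarrow> 'v set \<Rightarrow> 'v set \<Rightarrow> 'f set \<Rightarrow> 'v set \<Rightarrow> 'v set \<Rightarrow> 'f set \<Rightarrow> bool" where
  "free_amalgam scale ex V1 D1 F1 V2 D2 F2 V3 D3 F3 V4 D4 F4 \<longleftrightarrow>
     V2 \<inter> V3 = V1 \<and> V4 = setsum V2 V3 \<and>
     D4 = setsum D2 D3 \<and>
     linearly_disjoint F1 F2 F3 \<and> F4 = gen_field (F2 \<union> F3) \<and>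
     (\<forall>z2\<in>D2. \<forall>z3\<in>D3. ex (z2 + z3) = ex z2 * ex z3)"

end

theory Submission
  imports Defs "HOL-Algebra.Algebraic_Closure_Type"
begin

text \<open>Write each z \<in> D4 as c + e with c \<in> D2 and e \<in> D3. Linear disjointness of F2 and F3 over
  the full F1 makes D3 free from D2 over D1: for finite W \<subseteq> D3 and D1 \<subseteq> B \<subseteq> D2, each of the
  three ranks entering \<delta>(W/B) (K-linear dimension, Q-linear dimension, transcendence degree of
  ex(W)) is the same over B as over D1. The predimension is additive,
  \<delta>(X \<union> Y/B) = \<delta>(X/B) + \<delta>(Y/X \<union> B), and unchanged by adjoining Q-linear combinations.
  Hence closing the D2- and D3-parts of a finite Z \<subseteq> D4 to sets W2, W3 of predimension 0 gives
  \<delta>(W2 \<union> W3 \<union> Z/D1) = \<delta>(W2/D1) + \<delta>(W3/D1) = 0, and a similar splitting shows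
  \<delta>(Z/D1) \<ge> 0. The kernel is preserved because ex a * ex b = 1 puts ex a into
  F2 \<inter> F3 = F1 = ex(D1) \<union> {0}.\<close>

section \<open>Pregeometries and relative rank\<close>

definition rel_rank :: "('a set \<Rightarrow> 'a set) \<Rightarrow> 'a set \<Rightarrow> 'a set \<Rightarrow> nat" where
  "rel_rank cl A B = (LEAST n. \<exists>C. C \<subseteq> A \<and> finite C \<and> card C = n \<and> A \<subseteq> cl (C \<union> B))"

definition indep_over :: "('a set \<Rightarrow> 'a set) \<Rightarrow> 'a set \<Rightarrow> 'a set \<Rightarrow> bool" where
  "indep_over cl B C \<longleftrightarrow> (\<forall>c\<in>C. c \<notin> cl ((C - {c}) \<union> B))"

locale pregeometry =
  fixes cl :: "'a set \<Rightarrow> 'a set"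
  assumes cl_mono: "A \<subseteq> B \<Longrightarrow> cl A \<subseteq> cl B"
    and cl_ext: "A \<subseteq> cl A"
    and cl_idem: "cl (cl A) \<subseteq> cl A"
    and cl_exchange: "b \<in> cl (insert a C) \<Longrightarrow> b \<notin> cl C \<Longrightarrow> a \<in> cl (insert b C)"
begin

lemma cl_subset: "A \<subseteq> cl B \<Longrightarrow> cl A \<subseteq> cl B"
  using cl_mono cl_idem by blast

lemma indep_over_insert:
  assumes I: "indep_over cl B I" and s: "s \<notin> cl (I \<union> B)"
  shows "indep_over cl B (insert s I)"
  unfolding indep_over_def
proof
  fix c assume c: "c \<in> insert s I"
  have sI: "s \<notin> I" using s cl_ext[of "I \<union> B"] by blast
  show "c \<notin> cl ((insert s I - {c}) \<union> B)"
  proof (cases "c = s")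
    case True
    then show ?thesis using s sI by (simp add: insert_absorb)
  next
    case False
    then have cI: "c \<in> I" using c by auto
    have nc: "c \<notin> cl ((I - {c}) \<union> B)" using I cI unfolding indep_over_def by auto
    show ?thesis
    proof
      assume "c \<in> cl ((insert s I - {c}) \<union> B)"
      then have "c \<in> cl (insert s ((I - {c}) \<union> B))" using False by (simp add: insert_Diff_if)
      then have "s \<in> cl (insert c ((I - {c}) \<union> B))" using cl_exchange nc by blast
      moreover have "insert c ((I - {c}) \<union> B) = I \<union> B" using cI by auto
      ultimately show False using s by simp
    qed
  qed
qed

lemma indep_over_subset:
  assumes "indep_over cl B I" "J \<subseteq> I"
  shows "indep_over cl B J"
  unfolding indep_over_def
proof
  fix c assume c: "c \<in> J"
  have "cl ((J - {c}) \<union> B) \<subseteq> cl ((I - {c}) \<union> B)" using assms(2) by (intro cl_mono) blast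
  then show "c \<notin> cl ((J - {c}) \<union> B)" using assms c unfolding indep_over_def by blast
qed

lemma card_indep_over_le:
  assumes "finite G" "finite I" "indep_over cl B I" "I \<subseteq> cl (G \<union> B)"
  shows "card I \<le> card G"
  using assms
proof (induction "card (I - G)" arbitrary: I rule: less_induct)
  case less
  show ?case
  proof (cases "I \<subseteq> G")
    case True
    then show ?thesis using card_mono less.prems(1) by blast
  next
    case False
    then obtain i where i: "i \<in> I" "i \<notin> G" by blast
    have ni: "i \<notin> cl ((I - {i}) \<union> B)" using less.prems(3) i unfolding indep_over_def by auto
    have "\<not> G \<subseteq> cl ((I - {i}) \<union> B)"
    proof
      assume "G \<subseteq> cl ((I - {i}) \<union> B)"
      then have "G \<union> B \<subseteq> cl ((I - {i}) \<union> B)" using cl_ext[of "(I - {i}) \<union> B"] by blast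
      then show False using cl_subset[of "G \<union> B"] ni less.prems(4) i by blast
    qed
    then obtain g where g: "g \<in> G" "g \<notin> cl ((I - {i}) \<union> B)" by blast
    let ?I' = "insert g (I - {i})"
    have ind: "indep_over cl B ?I'"
      using indep_over_insert[OF indep_over_subset[OF less.prems(3)] g(2)] by blast
    have gI: "g \<notin> I" using g i cl_ext[of "(I - {i}) \<union> B"] by blast
    have "?I' - G = (I - G) - {i}" using g(1) by auto
    moreover have "i \<in> I - G" "finite (I - G)" using i less.prems(2) by auto
    ultimately have lt: "card (?I' - G) < card (I - G)" by (metis card_Diff1_less)
    have sub: "?I' \<subseteq> cl (G \<union> B)" using less.prems(4) g(1) cl_ext[of "G \<union> B"] by blast
    have "card ?I' \<le> card G"
      using less.hyps[OF lt less.prems(1) _ ind sub] less.prems(2) by simp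
    moreover have "card ?I' = card I" using gI i less.prems(2) by (metis DiffD1 card_Suc_Diff1 card_insert_disjoint finite_Diff)
    ultimately show ?thesis by simp
  qed
qed

lemma rel_rank_le: "C \<subseteq> A \<Longrightarrow> finite C \<Longrightarrow> A \<subseteq> cl (C \<union> B) \<Longrightarrow> rel_rank cl A B \<le> card C"
  unfolding rel_rank_def by (rule Least_le) blast

lemma rel_rank_basis:
  assumes "finite A"
  obtains C where "C \<subseteq> A" "finite C" "card C = rel_rank cl A B" "A \<subseteq> cl (C \<union> B)"
    "indep_over cl B C"
proof -
  let ?P = "\<lambda>n. \<exists>C. C \<subseteq> A \<and> finite C \<and> card C = n \<and> A \<subseteq> cl (C \<union> B)"
  have "A \<subseteq> cl (A \<union> B)" using cl_ext[of "A \<union> B"] by blast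
  then have "?P (card A)" using assms by blast
  then have "?P (rel_rank cl A B)" unfolding rel_rank_def by (rule LeastI)
  then obtain C where C: "C \<subseteq> A" "finite C" "card C = rel_rank cl A B" "A \<subseteq> cl (C \<union> B)"
    by blast
  have "indep_over cl B C"
    unfolding indep_over_def
  proof
    fix c assume c: "c \<in> C"
    show "c \<notin> cl ((C - {c}) \<union> B)"
    proof
      assume "c \<in> cl ((C - {c}) \<union> B)"
      then have "C \<union> B \<subseteq> cl ((C - {c}) \<union> B)" using cl_ext[of "(C - {c}) \<union> B"] by blast
      then have "A \<subseteq> cl ((C - {c}) \<union> B)" using C(4) cl_subset[of "C \<union> B"] by blast
      then have "rel_rank cl A B \<le> card (C - {c})" using C(1,2) by (intro rel_rank_le) auto
      moreover have "card (C - {c}) < card C" using C(2) c by (rule card_Diff1_less)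
      ultimately show False using C(3) by simp
    qed
  qed
  with C show thesis by (rule that)
qed

lemma card_indep_over_le_rel_rank:
  assumes "finite A" "finite I" "indep_over cl B I" "I \<subseteq> cl (A \<union> B)"
  shows "card I \<le> rel_rank cl A B"
proof -
  obtain C where C: "C \<subseteq> A" "finite C" "card C = rel_rank cl A B" "A \<subseteq> cl (C \<union> B)"
    using rel_rank_basis[OF assms(1)] .
  have "A \<union> B \<subseteq> cl (C \<union> B)" using C(4) cl_ext[of "C \<union> B"] by blast
  then have "I \<subseteq> cl (C \<union> B)" using assms(4) cl_subset[of "A \<union> B"] by blast
  then show ?thesis using card_indep_over_le[OF C(2) assms(2,3)] C(3) by simp
qed

lemma rel_rank_eq_card:
  assumes "C \<subseteq> A" "finite A" "indep_over cl B C" "A \<subseteq> cl (C \<union> B)"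
  shows "rel_rank cl A B = card C"
proof -
  have fC: "finite C" using assms(1,2) finite_subset by blast
  have "C \<subseteq> cl (A \<union> B)" using assms(1) cl_ext[of "A \<union> B"] by blast
  then show ?thesis
    using rel_rank_le[OF assms(1) fC assms(4)] card_indep_over_le_rel_rank[OF assms(2) fC assms(3)]
    by simp
qed

lemma rel_rank_cong:
  assumes "finite A" "finite A'" "A \<subseteq> cl (A' \<union> B)" "A' \<subseteq> cl (A \<union> B)"
  shows "rel_rank cl A B = rel_rank cl A' B"
proof -
  have le: "rel_rank cl A1 B \<le> rel_rank cl A2 B"
    if "finite A1" "finite A2" "A1 \<subseteq> cl (A2 \<union> B)" for A1 A2
  proof -
    obtain C where "C \<subseteq> A1" "finite C" "card C = rel_rank cl A1 B" "indep_over cl B C"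
      using rel_rank_basis[OF \<open>finite A1\<close>] by metis
    then show ?thesis using card_indep_over_le_rel_rank[OF \<open>finite A2\<close>] that(3) by fastforce
  qed
  show ?thesis using le assms by (simp add: le_antisym)
qed

lemma rel_rank_antimono:
  assumes "B \<subseteq> B'" "finite A"
  shows "rel_rank cl A B' \<le> rel_rank cl A B"
proof -
  obtain C where C: "C \<subseteq> A" "finite C" "card C = rel_rank cl A B" "A \<subseteq> cl (C \<union> B)"
    using rel_rank_basis[OF assms(2)] .
  have "A \<subseteq> cl (C \<union> B')" using C(4) assms(1) cl_mono[of "C \<union> B" "C \<union> B'"] by blast
  then show ?thesis using rel_rank_le[OF C(1,2)] C(3) by simp
qed

lemma rel_rank_between:
  assumes "B1 \<subseteq> B" "B \<subseteq> B2" "finite A" "rel_rank cl A B2 = rel_rank cl A B1"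
  shows "rel_rank cl A B = rel_rank cl A B1"
  using rel_rank_antimono[OF assms(1,3)] rel_rank_antimono[OF assms(2,3)] assms(4) by simp

lemma indep_over_extend:
  assumes "finite S" "I \<subseteq> S" "indep_over cl B I"
  obtains J where "I \<subseteq> J" "J \<subseteq> S" "indep_over cl B J" "S \<subseteq> cl (J \<union> B)"
  using assms
proof (induction "card (S - I)" arbitrary: I rule: less_induct)
  case less
  show ?case
  proof (cases "S \<subseteq> cl (I \<union> B)")
    case True
    then show ?thesis using less.prems by blast
  next
    case False
    then obtain s where s: "s \<in> S" "s \<notin> cl (I \<union> B)" by blast
    have sI: "s \<in> S - I" using s cl_ext[of "I \<union> B"] by blast
    have "S - insert s I = (S - I) - {s}" by blast
    then have "card (S - insert s I) < card (S - I)"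
      using less.prems(2) sI by (metis card_Diff1_less finite_Diff)
    then show ?thesis
      using less.hyps less.prems s indep_over_insert by (metis insert_subset subset_insertI2)
  qed
qed

text \<open>The part of a basis of A \<union> A' over B that extends a basis of A over B is a basis of A'
  over A \<union> B.\<close>
lemma rel_rank_Un:
  assumes fA: "finite A" and fA': "finite A'"
  shows "rel_rank cl (A \<union> A') B = rel_rank cl A B + rel_rank cl A' (A \<union> B)"
proof -
  obtain C where C: "C \<subseteq> A" "finite C" "card C = rel_rank cl A B" "A \<subseteq> cl (C \<union> B)"
    "indep_over cl B C"
    using rel_rank_basis[OF fA] .
  obtain J where J: "C \<subseteq> J" "J \<subseteq> C \<union> A'" "indep_over cl B J" "C \<union> A' \<subseteq> cl (J \<union> B)"
    using indep_over_extend[of "C \<union> A'" C B] C fA' by blast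
  have fJ: "finite J" using J(2) C(2) fA' finite_subset by blast
  have clCJ: "cl (C \<union> B) \<subseteq> cl (J \<union> B)" using J(1) cl_mono[of "C \<union> B" "J \<union> B"] by blast
  have "rel_rank cl (A \<union> A') B = card J"
    using rel_rank_eq_card[of J "A \<union> A'" B] J C(1,4) fA fA' clCJ by blast
  moreover have "rel_rank cl A' (A \<union> B) = card (J - C)"
  proof (rule rel_rank_eq_card)
    show "J - C \<subseteq> A'" "finite A'" using J(2) fA' by auto
    have "cl (J \<union> B) \<subseteq> cl ((J - C) \<union> (A \<union> B))" using J(1) C(1) by (intro cl_mono) blast
    then show "A' \<subseteq> cl ((J - C) \<union> (A \<union> B))" using J(4) by blast
    show "indep_over cl (A \<union> B) (J - C)"
      unfolding indep_over_def
    proof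
      fix c assume c: "c \<in> J - C"
      have "cl (C \<union> B) \<subseteq> cl ((J - {c}) \<union> B)" using J(1) c by (intro cl_mono) blast
      then have "((J - C) - {c}) \<union> (A \<union> B) \<subseteq> cl ((J - {c}) \<union> B)" using C(4) cl_ext[of "(J - {c}) \<union> B"] by blast
      then have "cl (((J - C) - {c}) \<union> (A \<union> B)) \<subseteq> cl ((J - {c}) \<union> B)" by (rule cl_subset)
      moreover have "c \<notin> cl ((J - {c}) \<union> B)" using J(3) c unfolding indep_over_def by blast
      ultimately show "c \<notin> cl (((J - C) - {c}) \<union> (A \<union> B))" by blast
    qed
  qed
  moreover have "card J = card C + card (J - C)"
    using J(1) fJ C(2) by (metis card_Un_disjoint finite_Diff Diff_disjoint Un_Diff_cancel sup.absorb2)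
  ultimately show ?thesis using C(3) by simp
qed

lemma finite_spanning_subset:
  assumes "finite A" "S \<subseteq> cl (A \<union> B)"
  obtains C where "finite C" "C \<subseteq> S" "S \<subseteq> cl (C \<union> B)"
proof -
  have "\<exists>I. finite I \<and> I \<subseteq> S \<and> indep_over cl B I \<and> card I = n"
    if none: "\<And>C. finite C \<Longrightarrow> C \<subseteq> S \<Longrightarrow> \<not> S \<subseteq> cl (C \<union> B)" for n
  proof (induction n)
    case 0
    show ?case by (rule exI[of _ "{}"]) (simp add: indep_over_def)
  next
    case (Suc n)
    then obtain I where I: "finite I" "I \<subseteq> S" "indep_over cl B I" "card I = n" by blast
    then obtain s where s: "s \<in> S" "s \<notin> cl (I \<union> B)" using none by blast
    then have "s \<notin> I" using cl_ext[of "I \<union> B"] by blast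
    then show ?case using indep_over_insert[OF I(3) s(2)] I s by (intro exI[of _ "insert s I"]) auto
  qed
  moreover have False
    if "finite I" "I \<subseteq> S" "indep_over cl B I" "card I = Suc (rel_rank cl A B)" for I
    using card_indep_over_le_rel_rank[OF assms(1) that(1,3)] that(2,4) assms(2) by auto
  ultimately show thesis using that by blast
qed

end


section \<open>Subfields and algebraic elements\<close>

hide_const (open) up_ring.coeff up_ring.monom Polynomials.degree Polynomials.lead_coeff
  Subrings.subfield

lemma subfield_gen_field: "subfield (gen_field S)"
  unfolding gen_field_def Defs.subfield_def by blast

lemma gen_field_superset: "S \<subseteq> gen_field S"
  unfolding gen_field_def by blast

lemma gen_field_least: "subfield F \<Longrightarrow> S \<subseteq> F \<Longrightarrow> gen_field S \<subseteq> F"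
  unfolding gen_field_def by blast

lemma gen_field_mono: "S \<subseteq> T \<Longrightarrow> gen_field S \<subseteq> gen_field T"
  by (meson gen_field_least gen_field_superset order_trans subfield_gen_field)

lemma gen_field_subfield: "subfield F \<Longrightarrow> gen_field F = F"
  by (simp add: gen_field_least gen_field_superset subset_antisym)

definition poly_over :: "'a::field set \<Rightarrow> 'a poly \<Rightarrow> bool" where
  "poly_over F p \<longleftrightarrow> (\<forall>i. coeff p i \<in> F)"

lemma algebraic_over_iff: "algebraic_over L a \<longleftrightarrow> (\<exists>p. p \<noteq> 0 \<and> poly_over L p \<and> poly p a = 0)"
  unfolding algebraic_over_def poly_over_def by blast

lemma algebraic_over_mono: "L \<subseteq> L' \<Longrightarrow> algebraic_over L a \<Longrightarrow> algebraic_over L' a"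
  unfolding algebraic_over_def by blast

context
  fixes F :: "'a::field set"
  assumes F: "subfield F"
begin

lemma subfield_0: "0 \<in> F" and subfield_1: "1 \<in> F"
  using F by (simp_all add: Defs.subfield_def)

lemma subfield_add: "x \<in> F \<Longrightarrow> y \<in> F \<Longrightarrow> x + y \<in> F"
  and subfield_mult: "x \<in> F \<Longrightarrow> y \<in> F \<Longrightarrow> x * y \<in> F"
  and subfield_uminus: "x \<in> F \<Longrightarrow> - x \<in> F"
  using F by (simp_all add: Defs.subfield_def)

lemma subfield_inverse: "x \<in> F \<Longrightarrow> inverse x \<in> F"
  using F by (cases "x = 0") (auto simp add: Defs.subfield_def)

lemma subfield_diff: "x \<in> F \<Longrightarrow> y \<in> F \<Longrightarrow> x - y \<in> F"
  using subfield_add[of x "- y"] subfield_uminus[of y] by simp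

lemma subfield_divide: "x \<in> F \<Longrightarrow> y \<in> F \<Longrightarrow> x / y \<in> F"
  using subfield_mult[of x "inverse y"] subfield_inverse[of y] by (simp add: divide_inverse)

lemma subfield_power: "x \<in> F \<Longrightarrow> x ^ n \<in> F"
  by (induction n) (auto simp: subfield_1 subfield_mult)

lemma subfield_sum: "(\<And>i. i \<in> I \<Longrightarrow> f i \<in> F) \<Longrightarrow> sum f I \<in> F"
  by (induction I rule: infinite_finite_induct) (auto simp: subfield_0 subfield_add)

lemma poly_over_add: "poly_over F p \<Longrightarrow> poly_over F q \<Longrightarrow> poly_over F (p + q)"
  by (simp add: poly_over_def subfield_add)

lemma poly_over_mult: "poly_over F p \<Longrightarrow> poly_over F q \<Longrightarrow> poly_over F (p * q)"
  unfolding poly_over_def coeff_mult by (auto intro!: subfield_sum subfield_mult)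

lemma poly_over_uminus: "poly_over F p \<Longrightarrow> poly_over F (- p)"
  by (simp add: poly_over_def subfield_uminus)

lemma poly_over_const: "c \<in> F \<Longrightarrow> poly_over F [:c:]"
  by (simp add: poly_over_def coeff_pCons subfield_0 split: nat.split)

lemma poly_over_X: "poly_over F [:0, 1:]"
  by (simp add: poly_over_def coeff_pCons subfield_0 subfield_1 split: nat.split)

lemma poly_over_sum: "(\<And>i. i \<in> I \<Longrightarrow> poly_over F (f i)) \<Longrightarrow> poly_over F (sum f I)"
  by (simp add: poly_over_def coeff_sum subfield_sum)

lemma poly_over_monom: "c \<in> F \<Longrightarrow> poly_over F (monom c n)"
  by (simp add: poly_over_def coeff_monom subfield_0)

lemma algebraic_over_self: "a \<in> F \<Longrightarrow> algebraic_over F a"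
  unfolding algebraic_over_iff
  by (rule exI[of _ "[:-a, 1:]"]) (auto simp: poly_over_def coeff_pCons subfield_0 subfield_1
    subfield_uminus split: nat.split)

end

lemma (in field) algebraic_over_finite_extension:
  assumes K: "Subrings.subfield K R" and xs: "set xs \<subseteq> carrier R"
    and alg: "\<And>x. x \<in> set xs \<Longrightarrow> (algebraic over K) x"
    and a: "a \<in> carrier R" and aF: "(algebraic over (finite_extension K xs)) a"
  shows "(algebraic over K) a"
proof -
  let ?F = "finite_extension K xs"
  have F: "Subrings.subfield ?F R" using finite_extension_is_subfield[OF K xs] alg by auto
  have "finite_dimension K ?F" using finite_extension_finite_dimension(1)[OF K xs] alg by auto
  moreover have "finite_dimension ?F (simple_extension ?F a)"
    using finite_dimensionI[OF dimension_simple_extension[OF F a aF]] .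
  ultimately have "finite_dimension K (simple_extension ?F a)"
    using telescopic_base_dim(1)[OF K F] by blast
  moreover have "subring (simple_extension ?F a) R"
    using simple_extension_is_subring[OF subfieldE(1)[OF F] a] .
  moreover have "a \<in> simple_extension ?F a"
    using simple_extension_mem[OF subfieldE(1)[OF F] a] .
  ultimately show ?thesis using finite_dimension_imp_algebraic[OF K] by blast
qed

lemma (in field) algebraic_over_algebraic_elements:
  assumes K: "Subrings.subfield K R" and a: "a \<in> carrier R"
    and aM: "(algebraic over {x \<in> carrier R. (algebraic over K) x}) a"
  shows "(algebraic over K) a"
proof -
  let ?M = "{x \<in> carrier R. (algebraic over K) x}"
  have M: "Subrings.subfield ?M R" using subfield_of_algebraics[OF K] .
  obtain p where p: "p \<in> carrier (?M[X])" "p \<noteq> []" "eval p a = \<zero>"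
    using algebraicE[OF subfieldE(1)[OF M] a aM] by blast
  have setp: "set p \<subseteq> ?M" using p(1) unfolding univ_poly_def polynomial_def by auto
  then have "set p \<subseteq> finite_extension K p"
    using finite_extension_mem[OF subfieldE(1)[OF K]] by auto
  then have "p \<in> carrier ((finite_extension K p)[X])"
    using p(1) unfolding univ_poly_def polynomial_def by auto
  then have "(algebraic over (finite_extension K p)) a" using algebraicI p by blast
  then show ?thesis using algebraic_over_finite_extension[OF K _ _ a] setp by auto
qed

text \<open>Viewing a type class field as the HOL-Algebra field ring_of_type_algebra transfers the
  transitivity of algebraicity proved above.\<close>

lemma ring_of_type_algebra_simps [simp]:
  "carrier ring_of_type_algebra = UNIV" "monoid.mult ring_of_type_algebra = (*)"
  "one ring_of_type_algebra = 1" "ring.zero ring_of_type_algebra = 0"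
  "add ring_of_type_algebra = (+)"
  by (auto simp: ring_of_type_algebra_def)

interpretation type_field: domain "ring_of_type_algebra :: 'a::field ring"
  using field_from_type_algebra field.axioms(1) by blast

lemma type_field_a_inv [simp]: "a_inv ring_of_type_algebra x = - (x::'a::field)"
  by (rule type_field.minus_equality) auto

lemma type_field_m_inv [simp]: "(x::'a::field) \<noteq> 0 \<Longrightarrow> m_inv ring_of_type_algebra x = inverse x"
  by (rule type_field.comm_inv_char) auto

lemma type_field_eval: "ring.eval ring_of_type_algebra q x = poly (Poly (rev q)) (x::'a::field)"
proof (induction q)
  case Nil
  then show ?case by (simp add: type_field.eval.simps)
next
  case (Cons c q)
  have "x [^]\<^bsub>ring_of_type_algebra\<^esub> n = x ^ n" for n
    by (induction n) auto
  with Cons show ?case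
    by (simp add: type_field.eval.simps Poly_append poly_monom algebra_simps)
qed

lemma subfield_iff_type_field_subfield:
  "subfield L \<longleftrightarrow> Subrings.subfield L (ring_of_type_algebra :: 'a::field ring)"
proof
  assume L: "subfield L"
  show "Subrings.subfield L ring_of_type_algebra"
  proof (rule field.subfieldI'[OF field_from_type_algebra type_field.subringI])
    show "L \<subseteq> carrier ring_of_type_algebra" by simp
  qed (use L in \<open>auto simp: Defs.subfield_def\<close>)
next
  assume L: "Subrings.subfield L (ring_of_type_algebra :: 'a::field ring)"
  have sr: "subring L ring_of_type_algebra" using L subfieldE(1) by blast
  show "subfield L"
    unfolding Defs.subfield_def
  proof (intro conjI ballI impI)
    show "0 \<in> L" "1 \<in> L" using subringE(2,3)[OF sr] by simp_all
    fix x assume x: "x \<in> L"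
    show "- x \<in> L" using subringE(5)[OF sr x] by simp
    show "x + y \<in> L" "x * y \<in> L" if "y \<in> L" for y
      using subringE(6,7)[OF sr x that] by simp_all
    show "inverse x \<in> L" if "x \<noteq> 0"
      using type_field.subfield_m_inv(1)[OF L, of x] x that by simp
  qed
qed

lemma algebraic_over_iff_type_field_algebraic:
  assumes L: "subfield L"
  shows "algebraic_over L a \<longleftrightarrow> (ring.algebraic ring_of_type_algebra over L) (a::'a::field)"
proof
  assume "algebraic_over L a"
  then obtain p where p: "p \<noteq> 0" "\<forall>i. coeff p i \<in> L" "poly p a = 0"
    unfolding algebraic_over_def by blast
  let ?q = "rev (coeffs p)"
  have "set ?q \<subseteq> L" using p(2) by (auto simp: coeffs_def)
  moreover have "hd ?q \<noteq> 0" using p(1) by (simp add: hd_rev last_coeffs_eq_coeff_degree)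
  ultimately have "?q \<in> carrier (L[X]\<^bsub>ring_of_type_algebra\<^esub>)"
    unfolding univ_poly_def polynomial_def by auto
  moreover have "?q \<noteq> []" using p(1) by simp
  moreover have "ring.eval ring_of_type_algebra ?q a = \<zero>\<^bsub>ring_of_type_algebra\<^esub>"
    using p(3) by (simp add: type_field_eval)
  ultimately show "(ring.algebraic ring_of_type_algebra over L) a" using type_field.algebraicI by blast
next
  assume alg: "(ring.algebraic ring_of_type_algebra over L) a"
  have sr: "subring L ring_of_type_algebra"
    using L subfield_iff_type_field_subfield subfieldE(1) by blast
  obtain q where q: "q \<in> carrier (L[X]\<^bsub>ring_of_type_algebra\<^esub>)" "q \<noteq> []"
      "ring.eval ring_of_type_algebra q a = \<zero>\<^bsub>ring_of_type_algebra\<^esub>"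
    using type_field.algebraicE[OF sr _ alg] by auto
  have sq: "set q \<subseteq> L" "hd q \<noteq> 0" using q(1,2) unfolding univ_poly_def polynomial_def by auto
  let ?p = "Poly (rev q)"
  have "coeff ?p i \<in> L" for i
    using sq(1) nth_mem[of i "rev q"] subfield_0[OF L] by (auto simp: nth_default_def)
  moreover have "coeff ?p (length q - 1) = hd q"
    using q(2) by (simp add: nth_default_def rev_nth hd_conv_nth)
  then have "?p \<noteq> 0" using sq(2) by (metis coeff_0)
  moreover have "poly ?p a = 0" using q(3) by (simp add: type_field_eval)
  ultimately show "algebraic_over L a" unfolding algebraic_over_def by blast
qed

lemma subfield_algebraic_elements:
  assumes L: "subfield L"
  shows "subfield {x. algebraic_over L (x::'a::field)}"
proof -
  have "Subrings.subfield L ring_of_type_algebra" using L subfield_iff_type_field_subfield by blast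
  then have "Subrings.subfield
      {x \<in> carrier ring_of_type_algebra. (ring.algebraic ring_of_type_algebra over L) x} ring_of_type_algebra"
    by (rule field.subfield_of_algebraics[OF field_from_type_algebra])
  moreover have "{x \<in> carrier ring_of_type_algebra. (ring.algebraic ring_of_type_algebra over L) x} =
      {x. algebraic_over L x}"
    using algebraic_over_iff_type_field_algebraic[OF L] by auto
  ultimately show ?thesis using subfield_iff_type_field_subfield[of "{x. algebraic_over L x}"] by simp
qed

lemma algebraic_over_trans:
  assumes L: "subfield L" and a: "algebraic_over {x. algebraic_over L x} (a::'a::field)"
  shows "algebraic_over L a"
proof -
  let ?M = "{x. algebraic_over L x}"
  have LR: "Subrings.subfield L ring_of_type_algebra"
    using L subfield_iff_type_field_subfield by blast
  have M: "?M = {x \<in> carrier ring_of_type_algebra. (ring.algebraic ring_of_type_algebra over L) x}"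
    using algebraic_over_iff_type_field_algebraic[OF L] by auto
  have "(ring.algebraic ring_of_type_algebra over ?M) a"
    using a algebraic_over_iff_type_field_algebraic subfield_algebraic_elements[OF L] by blast
  then have "(ring.algebraic ring_of_type_algebra over L) a"
    using field.algebraic_over_algebraic_elements[OF field_from_type_algebra LR] M by simp
  then show ?thesis using algebraic_over_iff_type_field_algebraic[OF L] by blast
qed


section \<open>Algebraic closure as a pregeometry\<close>

definition is_subring :: "'a::field set \<Rightarrow> bool" where
  "is_subring R \<longleftrightarrow> 1 \<in> R \<and> (\<forall>x\<in>R. - x \<in> R) \<and> (\<forall>x\<in>R. \<forall>y\<in>R. x + y \<in> R \<and> x * y \<in> R)"

definition fractions :: "'a::field set \<Rightarrow> 'a set" where
  "fractions R = {x / y | x y. x \<in> R \<and> y \<in> R \<and> y \<noteq> 0}"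

lemma is_subring_prod:
  assumes "is_subring R" "\<And>i. i \<in> I \<Longrightarrow> f i \<in> R"
  shows "prod f I \<in> R"
  using assms(2)
proof (induction I rule: infinite_finite_induct)
  case (insert i I)
  then show ?case using assms(1) unfolding is_subring_def by simp
qed (use assms(1) in \<open>simp_all add: is_subring_def\<close>)

lemma fractionsI: "x \<in> R \<Longrightarrow> y \<in> R \<Longrightarrow> y \<noteq> 0 \<Longrightarrow> x / y \<in> fractions R"
  unfolding fractions_def by blast

lemma subfield_fractions:
  assumes R: "is_subring R"
  shows "subfield (fractions R)"
  unfolding Defs.subfield_def
proof (intro conjI ballI impI)
  have one: "1 \<in> R" and neg: "\<And>x. x \<in> R \<Longrightarrow> - x \<in> R"
    and add: "\<And>x y. x \<in> R \<Longrightarrow> y \<in> R \<Longrightarrow> x + y \<in> R"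
    and mult: "\<And>x y. x \<in> R \<Longrightarrow> y \<in> R \<Longrightarrow> x * y \<in> R"
    using R by (auto simp: is_subring_def)
  have zero: "0 \<in> R" using add[OF one neg[OF one]] by simp
  show "0 \<in> fractions R" "1 \<in> fractions R"
    using fractionsI[OF zero one] fractionsI[OF one one] by simp_all
  fix u assume "u \<in> fractions R"
  then obtain a b where ab: "u = a / b" "a \<in> R" "b \<in> R" "b \<noteq> 0"
    unfolding fractions_def by blast
  show "- u \<in> fractions R" using fractionsI[OF neg[OF ab(2)] ab(3,4)] ab(1) by simp
  show "inverse u \<in> fractions R" if "u \<noteq> 0"
    using fractionsI[OF ab(3) ab(2)] ab that by simp
  fix v assume "v \<in> fractions R"
  then obtain c d where cd: "v = c / d" "c \<in> R" "d \<in> R" "d \<noteq> 0"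
    unfolding fractions_def by blast
  have "u + v = (a * d + c * b) / (b * d)" "u * v = (a * c) / (b * d)"
    using ab cd by (simp_all add: field_simps)
  moreover have "b * d \<in> R" "b * d \<noteq> 0" using ab cd mult by auto
  ultimately show "u + v \<in> fractions R" "u * v \<in> fractions R"
    using fractionsI ab cd add mult by metis+
qed

lemma gen_field_subset_fractions:
  assumes R: "is_subring R" and S: "S \<subseteq> R"
  shows "gen_field S \<subseteq> fractions R"
proof (rule gen_field_least[OF subfield_fractions[OF R]])
  have "1 \<in> R" using R by (simp add: is_subring_def)
  then show "S \<subseteq> fractions R" using S fractionsI[of _ R 1] by fastforce
qed

lemma algebraic_over_fractionsE:
  assumes R: "is_subring R" and alg: "algebraic_over (fractions R) s"
  obtains n d where "\<And>i. d i \<in> R" "d n \<noteq> 0" "(\<Sum>i\<le>n. d i * s ^ i) = 0"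
proof -
  obtain p where p: "p \<noteq> 0" "\<forall>i. coeff p i \<in> fractions R" "poly p s = 0"
    using alg unfolding algebraic_over_def by blast
  have "\<forall>i. \<exists>x y. x \<in> R \<and> y \<in> R \<and> y \<noteq> 0 \<and> coeff p i = x / y"
    using p(2) unfolding fractions_def by blast
  then obtain x where "\<forall>i. \<exists>y. x i \<in> R \<and> y \<in> R \<and> y \<noteq> 0 \<and> coeff p i = x i / y"
    by (rule choice[THEN exE])
  then obtain y where xy: "\<forall>i. x i \<in> R \<and> y i \<in> R \<and> y i \<noteq> 0 \<and> coeff p i = x i / y i"
    by (rule choice[THEN exE])
  define n where "n = degree p"
  define Y where "Y = (\<Prod>j\<le>n. y j)"
  define d where "d i = x i * (\<Prod>j\<in>{..n} - {i}. y j)" for i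
  have d_eq: "d i = coeff p i * Y" if "i \<le> n" for i
  proof -
    have "Y = y i * (\<Prod>j\<in>{..n} - {i}. y j)" unfolding Y_def using that by (simp add: prod.remove)
    then show ?thesis unfolding d_def using xy by simp
  qed
  have "d i \<in> R" for i
    using R xy is_subring_prod[OF R, of "{..n} - {i}" y] unfolding d_def is_subring_def by simp
  moreover have "Y \<noteq> 0" unfolding Y_def using xy by simp
  then have "d n \<noteq> 0" using d_eq[of n] p(1) unfolding n_def by simp
  moreover have "(\<Sum>i\<le>n. d i * s ^ i) = Y * poly p s"
    by (simp add: d_eq poly_altdef n_def sum_distrib_left mult_ac)
  then have "(\<Sum>i\<le>n. d i * s ^ i) = 0" using p(3) by simp
  ultimately show thesis by (rule that)
qed

lemma transcendental_coeff_sum_eq_0: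
  assumes L: "subfield L" and h: "\<And>i. poly_over L (h i)" and b: "\<not> algebraic_over L b"
    and sum: "(\<Sum>i\<le>n. coeff (h i) k * b ^ i) = 0" and j: "j \<le> n"
  shows "coeff (h j) k = 0"
proof -
  define Q where "Q = (\<Sum>i\<le>n. monom (coeff (h i) k) i)"
  have "poly_over L Q"
    unfolding Q_def using h by (intro poly_over_sum[OF L] poly_over_monom[OF L]) (auto simp: poly_over_def)
  moreover have "poly Q b = 0" using sum unfolding Q_def by (simp add: poly_sum poly_monom)
  ultimately have "Q = 0" using b unfolding algebraic_over_iff by blast
  moreover have "coeff Q j = coeff (h j) k" unfolding Q_def using j by (simp add: coeff_sum_monom)
  ultimately show ?thesis by simp
qed

text \<open>Regroup the bivariate polynomial \<open>\<Sum>i\<le>n. h i(X) Y^i\<close> as a polynomial in X with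
  coefficients in L(b); these do not all vanish because b is transcendental over L.\<close>
lemma algebraic_over_of_bivariate_root:
  assumes L: "subfield L" and h: "\<And>i. poly_over L (h i)" and hn: "h n \<noteq> 0"
    and root: "(\<Sum>i\<le>n. poly (h i) a * b ^ i) = 0" and b: "\<not> algebraic_over L b"
  shows "algebraic_over (gen_field (insert b L)) a"
proof -
  define M where "M = gen_field (insert b L)"
  have M: "subfield M" unfolding M_def by (rule subfield_gen_field)
  have LM: "L \<subseteq> M" and bM: "b \<in> M" unfolding M_def using gen_field_superset by blast+
  define m where "m = (\<Sum>i\<le>n. degree (h i))"
  have dm: "degree (h i) \<le> m" if "i \<le> n" for i
    unfolding m_def using that by (intro member_le_sum) auto
  define r where "r k = (\<Sum>i\<le>n. coeff (h i) k * b ^ i)" for k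
  define R where "R = (\<Sum>k\<le>m. monom (r k) k)"
  have coeff_R: "coeff R k = (if k \<le> m then r k else 0)" for k
    unfolding R_def by (simp add: coeff_sum coeff_monom)
  have poly_h: "poly (h i) a = (\<Sum>k\<le>m. coeff (h i) k * a ^ k)" if "i \<le> n" for i
  proof -
    have "poly (h i) a = poly (\<Sum>k\<le>m. monom (coeff (h i) k) k) a"
      using poly_as_sum_of_monoms'[OF dm[OF that]] by simp
    then show ?thesis by (simp add: poly_sum poly_monom)
  qed
  have "poly R a = (\<Sum>k\<le>m. \<Sum>i\<le>n. coeff (h i) k * b ^ i * a ^ k)"
    unfolding R_def r_def by (simp add: poly_sum poly_monom sum_distrib_right)
  also have "\<dots> = (\<Sum>i\<le>n. \<Sum>k\<le>m. coeff (h i) k * b ^ i * a ^ k)"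
    by (rule sum.swap)
  also have "\<dots> = (\<Sum>i\<le>n. poly (h i) a * b ^ i)"
    by (rule sum.cong) (auto simp: poly_h sum_distrib_left sum_distrib_right mult_ac)
  finally have "poly R a = 0" using root by simp
  moreover have "poly_over M R"
    unfolding poly_over_def coeff_R r_def using h LM bM
    by (auto simp: poly_over_def intro!: subfield_sum[OF M] subfield_mult[OF M]
        subfield_power[OF M] subfield_0[OF M])
  moreover have "R \<noteq> 0"
  proof
    assume "R = 0"
    have "coeff (h n) k = 0" for k
    proof (cases "k \<le> m")
      case True
      then have "(\<Sum>i\<le>n. coeff (h i) k * b ^ i) = 0" using \<open>R = 0\<close> coeff_R[of k] unfolding r_def by simp
      then show ?thesis by (rule transcendental_coeff_sum_eq_0[OF L h b _ order_refl])
    next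
      case False
      then show ?thesis using dm[of n] by (simp add: coeff_eq_0)
    qed
    then show False using hn by (simp add: poly_eq_iff)
  qed
  ultimately show ?thesis unfolding M_def algebraic_over_iff by blast
qed

definition acl :: "'a::field set \<Rightarrow> 'a set" where
  "acl S = {a. algebraic_over (gen_field S) a}"

lemma gen_field_subset_acl: "gen_field S \<subseteq> acl S"
  unfolding acl_def using algebraic_over_self[OF subfield_gen_field] by blast

lemma is_subring_poly_values:
  assumes L: "subfield L"
  shows "is_subring {poly f a | f. poly_over L f}" (is "is_subring ?R")
  unfolding is_subring_def
proof (intro conjI ballI)
  show "1 \<in> ?R" using poly_over_const[OF L subfield_1[OF L]] by (intro CollectI exI[of _ "[:1:]"]) simp
  fix x assume "x \<in> ?R"
  then obtain f where f: "poly_over L f" "x = poly f a" by blast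
  show "- x \<in> ?R" using poly_over_uminus[OF L f(1)] f(2) by force
  fix y assume "y \<in> ?R"
  then obtain g where g: "poly_over L g" "y = poly g a" by blast
  show "x + y \<in> ?R" using poly_over_add[OF L f(1) g(1)] f(2) g(2) by force
  show "x * y \<in> ?R" using poly_over_mult[OF L f(1) g(1)] f(2) g(2) by force
qed

lemma acl_exchange:
  assumes b: "b \<in> acl (insert a C)" and nb: "b \<notin> acl C"
  shows "a \<in> acl (insert b C)"
proof -
  define L where "L = gen_field C"
  have L: "subfield L" unfolding L_def by (rule subfield_gen_field)
  define R where "R = {poly f a | f. poly_over L f}"
  have R: "is_subring R" unfolding R_def by (rule is_subring_poly_values[OF L])
  have "insert a C \<subseteq> R"
  proof
    fix x assume "x \<in> insert a C"
    then consider "x = a" | "x \<in> L" unfolding L_def using gen_field_superset by blast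
    then show "x \<in> R"
    proof cases
      case 1
      then show ?thesis unfolding R_def using poly_over_X[OF L] by (intro CollectI exI[of _ "[:0, 1:]"]) simp
    next
      case 2
      then show ?thesis unfolding R_def using poly_over_const[OF L] by (intro CollectI exI[of _ "[:x:]"]) simp
    qed
  qed
  then have "algebraic_over (fractions R) b"
    using b gen_field_subset_fractions[OF R] algebraic_over_mono unfolding acl_def by blast
  then obtain n d where d: "\<And>i. d i \<in> R" "d n \<noteq> 0" "(\<Sum>i\<le>n. d i * b ^ i) = 0"
    using algebraic_over_fractionsE[OF R] by blast
  have "\<forall>i. \<exists>f. poly_over L f \<and> d i = poly f a" using d(1) unfolding R_def by blast
  then obtain h where h: "\<And>i. poly_over L (h i)" "\<And>i. d i = poly (h i) a"
    by (metis choice)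
  have "h n \<noteq> 0" using d(2) h(2) by auto
  moreover have "\<not> algebraic_over L b" using nb unfolding acl_def L_def by simp
  ultimately have "algebraic_over (gen_field (insert b L)) a"
    using algebraic_over_of_bivariate_root[OF L h(1)] d(3) h(2) by simp
  moreover have "gen_field (insert b L) \<subseteq> gen_field (insert b C)"
    unfolding L_def using gen_field_mono[of C "insert b C"] gen_field_superset[of "insert b C"]
    by (intro gen_field_least[OF subfield_gen_field]) blast
  ultimately show ?thesis unfolding acl_def using algebraic_over_mono by blast
qed

lemma pregeometry_acl: "pregeometry acl"
proof
  show "acl A \<subseteq> acl B" if "A \<subseteq> B" for A B :: "'a set"
    using gen_field_mono[OF that] algebraic_over_mono unfolding acl_def by blast
  show "A \<subseteq> acl A" for A :: "'a set"
    using gen_field_subset_acl gen_field_superset by blast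
  show "acl (acl A) \<subseteq> acl A" for A :: "'a set"
  proof
    fix x assume "x \<in> acl (acl A)"
    moreover have "subfield (acl A)"
      unfolding acl_def by (rule subfield_algebraic_elements[OF subfield_gen_field])
    ultimately have "algebraic_over (acl A) x" unfolding acl_def[of "acl A"] by (simp add: gen_field_subfield)
    then show "x \<in> acl A" using algebraic_over_trans[OF subfield_gen_field] unfolding acl_def by simp
  qed
  show "a \<in> acl (insert b C)" if "b \<in> acl (insert a C)" "b \<notin> acl C" for a b :: 'a and C
    using acl_exchange that .
qed

lemma tdeg_eq_rel_rank: "tdeg A B = rel_rank acl A B"
  by (simp add: tdeg_def rel_rank_def acl_def subset_iff Un_commute Ball_def)


section \<open>Linear disjointness\<close>

inductive_set sums_of_products :: "'a::field set \<Rightarrow> 'a set \<Rightarrow> 'a set" for A B where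
  product: "a \<in> A \<Longrightarrow> b \<in> B \<Longrightarrow> a * b \<in> sums_of_products A B"
| add: "x \<in> sums_of_products A B \<Longrightarrow> y \<in> sums_of_products A B \<Longrightarrow> x + y \<in> sums_of_products A B"

context
  fixes A B :: "'a::field set"
  assumes A: "subfield A" and B: "subfield B"
begin

lemma sums_of_products_mult_product:
  "x \<in> sums_of_products A B \<Longrightarrow> a \<in> A \<Longrightarrow> b \<in> B \<Longrightarrow> x * (a * b) \<in> sums_of_products A B"
proof (induction rule: sums_of_products.induct)
  case (product a' b')
  have "a' * b' * (a * b) = (a' * a) * (b' * b)" by (simp add: mult_ac)
  then show ?case
    using product subfield_mult[OF A] subfield_mult[OF B] sums_of_products.product by metis
next
  case (add x y)
  then show ?case by (simp add: distrib_right sums_of_products.add)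
qed

lemma sums_of_products_mult:
  assumes x: "x \<in> sums_of_products A B" and y: "y \<in> sums_of_products A B"
  shows "x * y \<in> sums_of_products A B"
  using y
proof (induction rule: sums_of_products.induct)
  case (product a b)
  then show ?case using sums_of_products_mult_product x by blast
next
  case (add y z)
  then show ?case by (simp add: distrib_left sums_of_products.add)
qed

lemma sums_of_products_uminus: "x \<in> sums_of_products A B \<Longrightarrow> - x \<in> sums_of_products A B"
proof (induction rule: sums_of_products.induct)
  case (product a b)
  then show ?case using sums_of_products.product[where a = "- a" and b = b] subfield_uminus[OF A] by simp
next
  case (add x y)
  then show ?case using sums_of_products.add[where x = "- x" and y = "- y"] by (simp add: add.commute)
qed

lemma sums_of_products_superset: "A \<union> B \<subseteq> sums_of_products A B"
proof
  fix x assume "x \<in> A \<union> B"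
  then consider "x \<in> A" | "x \<in> B" by blast
  then show "x \<in> sums_of_products A B"
  proof cases
    case 1
    then show ?thesis using sums_of_products.product[where a = x and b = 1] subfield_1[OF B] by simp
  next
    case 2
    then show ?thesis using sums_of_products.product[where a = 1 and b = x] subfield_1[OF A] by simp
  qed
qed

lemma is_subring_sums_of_products: "is_subring (sums_of_products A B)"
  unfolding is_subring_def
proof (intro conjI ballI)
  show "1 \<in> sums_of_products A B" using sums_of_products_superset subfield_1[OF A] by blast
qed (simp_all add: sums_of_products_uminus sums_of_products.add sums_of_products_mult)

lemma sums_of_products_repr:
  "x \<in> sums_of_products A B \<Longrightarrow>
    \<exists>T \<beta>. finite T \<and> T \<subseteq> A \<and> (\<forall>t. \<beta> t \<in> B) \<and> x = (\<Sum>t\<in>T. t * \<beta> t)"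
proof (induction rule: sums_of_products.induct)
  case (product a b)
  then show ?case by (intro exI[of _ "{a}"] exI[of _ "\<lambda>_. b"]) auto
next
  case (add x y)
  then obtain T1 \<beta>1 T2 \<beta>2 where
    t1: "finite T1" "T1 \<subseteq> A" "\<forall>t. \<beta>1 t \<in> B" "x = (\<Sum>t\<in>T1. t * \<beta>1 t)" and
    t2: "finite T2" "T2 \<subseteq> A" "\<forall>t. \<beta>2 t \<in> B" "y = (\<Sum>t\<in>T2. t * \<beta>2 t)"
    by blast
  define \<beta> where "\<beta> t = (if t \<in> T1 then \<beta>1 t else 0) + (if t \<in> T2 then \<beta>2 t else 0)" for t
  have "\<forall>t. \<beta> t \<in> B"
    unfolding \<beta>_def using t1(3) t2(3) subfield_0[OF B] subfield_add[OF B] by simp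
  moreover have "(\<Sum>t\<in>T1 \<union> T2. t * (if t \<in> T1 then \<beta>1 t else 0)) = x"
    unfolding t1(4) using t1(1) t2(1) by (intro sum.mono_neutral_cong_right) auto
  moreover have "(\<Sum>t\<in>T1 \<union> T2. t * (if t \<in> T2 then \<beta>2 t else 0)) = y"
    unfolding t2(4) using t1(1) t2(1) by (intro sum.mono_neutral_cong_right) auto
  ultimately show ?case using t1(1,2) t2(1,2)
    by (intro exI[of _ "T1 \<union> T2"] exI[of _ \<beta>]) (auto simp: \<beta>_def distrib_left sum.distrib)
qed

lemma sums_of_products_common_repr:
  assumes I: "finite I" and d: "\<And>i. i \<in> I \<Longrightarrow> d i \<in> sums_of_products A B"
  obtains T \<beta> where "finite T" "T \<subseteq> A" "\<And>t i. \<beta> t i \<in> B"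
    "\<And>i. i \<in> I \<Longrightarrow> d i = (\<Sum>t\<in>T. t * \<beta> t i)"
proof -
  have "\<forall>i\<in>I. \<exists>Tb. finite (fst Tb) \<and> fst Tb \<subseteq> A \<and> (\<forall>t. snd Tb t \<in> B) \<and>
      d i = (\<Sum>t\<in>fst Tb. t * snd Tb t)"
  proof
    fix i assume "i \<in> I"
    from sums_of_products_repr[OF d[OF this]] obtain T \<beta>
      where "finite T" "T \<subseteq> A" "\<forall>t. \<beta> t \<in> B" "d i = (\<Sum>t\<in>T. t * \<beta> t)"
      by (elim exE conjE)
    then show "\<exists>Tb. finite (fst Tb) \<and> fst Tb \<subseteq> A \<and> (\<forall>t. snd Tb t \<in> B) \<and>
        d i = (\<Sum>t\<in>fst Tb. t * snd Tb t)"
      by (intro exI[of _ "(T, \<beta>)"]) simp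
  qed
  then obtain Tb where Tb: "\<forall>i\<in>I. finite (fst (Tb i)) \<and> fst (Tb i) \<subseteq> A \<and>
      (\<forall>t. snd (Tb i) t \<in> B) \<and> d i = (\<Sum>t\<in>fst (Tb i). t * snd (Tb i) t)"
    by (rule bchoice[THEN exE])
  define T where "T = (\<Union>i\<in>I. fst (Tb i))"
  define \<beta> where "\<beta> t i = (if i \<in> I \<and> t \<in> fst (Tb i) then snd (Tb i) t else 0)" for t i
  have fT: "finite T" using I Tb unfolding T_def by blast
  moreover have "T \<subseteq> A" using Tb unfolding T_def by blast
  moreover have "\<beta> t i \<in> B" for t i unfolding \<beta>_def using Tb subfield_0[OF B] by auto
  moreover have "d i = (\<Sum>t\<in>T. t * \<beta> t i)" if i: "i \<in> I" for i
  proof -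
    have "(\<Sum>t\<in>T. t * \<beta> t i) = (\<Sum>t\<in>fst (Tb i). t * snd (Tb i) t)"
      unfolding \<beta>_def using fT i unfolding T_def by (intro sum.mono_neutral_cong_right) auto
    then show ?thesis using Tb i by simp
  qed
  ultimately show thesis by (rule that)
qed

end

lemma not_lin_indep_overE:
  assumes F: "subfield F" and "finite T" and dep: "\<not> lin_indep_over F T"
  obtains t0 lam where "t0 \<in> T" "\<And>t. lam t \<in> F" "t0 = (\<Sum>t\<in>T - {t0}. lam t * t)"
proof -
  obtain S c t0 where S: "finite S" "S \<subseteq> T" "\<forall>t\<in>S. c t \<in> F" "(\<Sum>t\<in>S. c t * t) = 0"
      "t0 \<in> S" "c t0 \<noteq> 0"
    using dep unfolding lin_indep_over_def by blast
  define lam where "lam t = (if t \<in> S - {t0} then - c t / c t0 else 0)" for t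
  have lam: "lam t \<in> F" for t
  proof (cases "t \<in> S - {t0}")
    case True
    then show ?thesis unfolding lam_def using S(3,5) by (simp add: subfield_divide[OF F] subfield_uminus[OF F])
  next
    case False
    then have "lam t = 0" unfolding lam_def by simp
    then show ?thesis using subfield_0[OF F] by simp
  qed
  have "(\<Sum>t\<in>S. c t * t) = c t0 * t0 + (\<Sum>t\<in>S - {t0}. c t * t)"
    using S(1,5) by (simp add: sum.remove)
  then have "c t0 * t0 = - (\<Sum>t\<in>S - {t0}. c t * t)" using S(4) by (simp add: eq_neg_iff_add_eq_0)
  then have "t0 = - (\<Sum>t\<in>S - {t0}. c t * t) / c t0" using S(6) by (simp add: field_simps)
  also have "\<dots> = (\<Sum>t\<in>S - {t0}. lam t * t)"
    unfolding lam_def by (simp add: sum_divide_distrib flip: sum_negf)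
  also have "\<dots> = (\<Sum>t\<in>T - {t0}. lam t * t)"
    using S(2) \<open>finite T\<close> unfolding lam_def by (intro sum.mono_neutral_cong_left) auto
  finally have eq: "t0 = (\<Sum>t\<in>T - {t0}. lam t * t)" .
  have "t0 \<in> T" using S(2,5) by blast
  from this lam eq show thesis by (rule that)
qed

lemma lin_indep_root_algebraic:
  assumes E: "subfield E" and F3: "subfield F3" and EF3: "E \<subseteq> F3" and s: "s \<in> F3"
    and T: "finite T" "lin_indep_over F3 T" and \<beta>: "\<And>t i. \<beta> t i \<in> E"
    and root: "(\<Sum>i\<le>n. (\<Sum>t\<in>T. t * \<beta> t i) * s ^ i) = 0"
    and j: "j \<le> n" "(\<Sum>t\<in>T. t * \<beta> t j) \<noteq> 0"
  shows "algebraic_over E s"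
proof -
  define c where "c t = (\<Sum>i\<le>n. \<beta> t i * s ^ i)" for t
  have "c t \<in> F3" for t
    unfolding c_def using \<beta> EF3 s
    by (intro subfield_sum[OF F3] subfield_mult[OF F3] subfield_power[OF F3]) auto
  moreover have "(\<Sum>t\<in>T. c t * t) = 0"
    using root unfolding c_def by (simp add: sum_distrib_right sum_distrib_left mult_ac sum.swap[of _ T])
  ultimately have c0: "\<forall>t\<in>T. c t = 0" using T unfolding lin_indep_over_def by blast
  obtain t0 where t0: "t0 \<in> T" "\<beta> t0 j \<noteq> 0"
    using j(2) by (metis (no_types, lifting) mult_zero_right sum.neutral)
  define P where "P = (\<Sum>i\<le>n. monom (\<beta> t0 i) i)"
  have "coeff P j = \<beta> t0 j" unfolding P_def using j(1) by (simp add: coeff_sum_monom)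
  then have "P \<noteq> 0" using t0 by auto
  moreover have "poly_over E P"
    unfolding P_def using \<beta> by (intro poly_over_sum[OF E] poly_over_monom[OF E])
  moreover have "poly P s = c t0" unfolding P_def c_def by (simp add: poly_sum poly_monom)
  ultimately show ?thesis unfolding algebraic_over_iff using c0 t0(1) by auto
qed

text \<open>Induction on the size of T: a dependent T over F1 is shrunk by expressing one element
  through the others, which keeps the coefficients \<beta> in E because F1 \<subseteq> E.\<close>
lemma linearly_disjoint_root_algebraic:
  assumes F1: "subfield F1" and E: "subfield E" and F3: "subfield F3"
    and F1E: "F1 \<subseteq> E" and EF3: "E \<subseteq> F3"
    and LD: "linearly_disjoint F1 F2 F3" and s: "s \<in> F3"
  shows "finite T \<Longrightarrow> T \<subseteq> F2 \<Longrightarrow> (\<And>t i. \<beta> t i \<in> E) \<Longrightarrow>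
    (\<Sum>i\<le>n. (\<Sum>t\<in>T. t * \<beta> t i) * s ^ i) = 0 \<Longrightarrow> j \<le> n \<Longrightarrow> (\<Sum>t\<in>T. t * \<beta> t j) \<noteq> 0 \<Longrightarrow>
    algebraic_over E s"
proof (induction "card T" arbitrary: T \<beta> rule: less_induct)
  case less
  note T = less.prems
  show ?case
  proof (cases "lin_indep_over F1 T")
    case True
    then have "lin_indep_over F3 T" using LD T(1,2) unfolding linearly_disjoint_def by blast
    then show ?thesis using lin_indep_root_algebraic[OF E F3 EF3 s T(1)] T(3-6) by blast
  next
    case False
    then obtain t0 lam where t0: "t0 \<in> T" "\<And>t. lam t \<in> F1" "t0 = (\<Sum>t\<in>T - {t0}. lam t * t)"
      using not_lin_indep_overE[OF F1 T(1)] by blast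
    define \<beta>' where "\<beta>' t i = \<beta> t i + lam t * \<beta> t0 i" for t i
    have \<beta>': "\<beta>' t i \<in> E" for t i
      unfolding \<beta>'_def using T(3) t0(2) F1E subfield_add[OF E] subfield_mult[OF E] by blast
    have sums: "(\<Sum>t\<in>T - {t0}. t * \<beta>' t i) = (\<Sum>t\<in>T. t * \<beta> t i)" for i
    proof -
      have "(\<Sum>t\<in>T - {t0}. t * \<beta>' t i) =
          (\<Sum>t\<in>T - {t0}. t * \<beta> t i) + (\<Sum>t\<in>T - {t0}. lam t * t) * \<beta> t0 i"
        unfolding \<beta>'_def by (simp add: distrib_left sum.distrib sum_distrib_left sum_distrib_right mult_ac)
      also have "\<dots> = (\<Sum>t\<in>T - {t0}. t * \<beta> t i) + t0 * \<beta> t0 i"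
        using t0(3) by simp
      also have "\<dots> = (\<Sum>t\<in>T. t * \<beta> t i)"
        using T(1) t0(1) by (simp add: sum.remove add.commute)
      finally show ?thesis .
    qed
    have "card (T - {t0}) < card T" using T(1) t0(1) by (rule card_Diff1_less)
    moreover have "finite (T - {t0})" "T - {t0} \<subseteq> F2" using T(1,2) by auto
    ultimately show ?thesis
      using less.hyps[of "T - {t0}" \<beta>'] T(4-6) \<beta>' by (simp add: sums)
  qed
qed

lemma linearly_disjoint_algebraic_over:
  assumes F1: "subfield F1" and F2: "subfield F2" and E: "subfield E" and F3: "subfield F3"
    and F1E: "F1 \<subseteq> E" and EF3: "E \<subseteq> F3"
    and LD: "linearly_disjoint F1 F2 F3" and s: "s \<in> F3"
    and alg: "algebraic_over (gen_field (F2 \<union> E)) s"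
  shows "algebraic_over E s"
proof -
  let ?R = "sums_of_products F2 E"
  have R: "is_subring ?R" by (rule is_subring_sums_of_products[OF F2 E])
  have "algebraic_over (fractions ?R) s"
    using alg gen_field_subset_fractions[OF R sums_of_products_superset[OF F2 E]]
      algebraic_over_mono by blast
  then obtain n d where d: "\<And>i. d i \<in> ?R" "d n \<noteq> 0" "(\<Sum>i\<le>n. d i * s ^ i) = 0"
    using algebraic_over_fractionsE[OF R] by blast
  obtain T \<beta> where T: "finite T" "T \<subseteq> F2" "\<And>t i. \<beta> t i \<in> E"
    "\<And>i. i \<in> {..n} \<Longrightarrow> d i = (\<Sum>t\<in>T. t * \<beta> t i)"
    using sums_of_products_common_repr[OF F2 E, of "{..n}" d] d(1) by blast
  show ?thesis
    using linearly_disjoint_root_algebraic[OF F1 E F3 F1E EF3 LD s T(1-3), where n = n and j = n] d(2,3) T(4)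
    by simp
qed

lemma lin_indep_over_one_notin:
  assumes F: "subfield F" and t: "t \<notin> F"
  shows "lin_indep_over F {1, t}"
  unfolding lin_indep_over_def
proof (intro allI impI)
  fix S c assume S: "finite S" "S \<subseteq> {1, t}" and cF: "\<forall>s\<in>S. c s \<in> F"
    and sum: "(\<Sum>s\<in>S. c s * s) = 0"
  have t1: "t \<noteq> 1" using t subfield_1[OF F] by auto
  have "c t = 0" if "S = {1, t}"
  proof (rule ccontr)
    assume "c t \<noteq> 0"
    then have "t = - c 1 / c t" using sum that t1 by (simp add: field_simps eq_neg_iff_add_eq_0)
    moreover have "- c 1 / c t \<in> F"
      using cF that subfield_uminus[OF F] subfield_divide[OF F] by simp
    ultimately show False using t by simp
  qed
  moreover have "S = {} \<or> S = {1} \<or> S = {t} \<or> S = {1, t}" using S(2) by blast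
  ultimately show "\<forall>s\<in>S. c s = 0" using sum t1 t subfield_0[OF F] by auto
qed

lemma not_lin_indep_over_one_mem:
  assumes F: "subfield F" and t: "t \<in> F" "t \<noteq> 1"
  shows "\<not> lin_indep_over F {1, t}"
proof
  assume ind: "lin_indep_over F {1, t}"
  define c where "c (s::'a) = (if s = 1 then t else - 1)" for s
  have sum: "(\<Sum>s\<in>{1, t}. c s * s) = 0" using t(2) unfolding c_def by simp
  have cF: "c s \<in> F" if "s \<in> {1, t}" for s
    using that t subfield_1[OF F] subfield_uminus[OF F] unfolding c_def by auto
  have "c t = 0"
    using ind[unfolded lin_indep_over_def, rule_format, of "{1, t}" c t, OF _ _ cF sum] by simp
  then show False using t(2) unfolding c_def by simp
qed

lemma linearly_disjoint_Int:
  assumes F1: "subfield F1" and F2: "subfield F2" and F3: "subfield F3"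
    and LD: "linearly_disjoint F1 F2 F3"
  shows "F2 \<inter> F3 \<subseteq> F1"
proof
  fix t assume t: "t \<in> F2 \<inter> F3"
  show "t \<in> F1"
  proof (rule ccontr)
    assume nt: "t \<notin> F1"
    then have "lin_indep_over F3 {1, t}"
      using LD lin_indep_over_one_notin[OF F1] t subfield_1[OF F2] unfolding linearly_disjoint_def by simp
    moreover have "t \<noteq> 1" using nt subfield_1[OF F1] by auto
    ultimately show False using not_lin_indep_over_one_mem[OF F3] t by blast
  qed
qed


section \<open>Linear spans over K and over Q\<close>

lemma vector_space_qscale: "vector_space scale \<Longrightarrow> vector_space (qscale scale)"
  unfolding vector_space_def qscale_def by (simp add: of_rat_add of_rat_mult)

lemma pregeometry_span: "vector_space sc \<Longrightarrow> pregeometry (module.span sc)"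
proof -
  assume "vector_space sc"
  then interpret vector_space sc .
  show ?thesis
    by standard (auto simp: span_mono span_superset span_span intro: in_span_insert)
qed

lemma ldim_eq_rel_rank: "ldim sc A B = rel_rank (module.span sc) A B"
  by (simp add: ldim_def rel_rank_def)

lemma span_qscale_subset:
  assumes "vector_space scale"
  shows "module.span (qscale scale) S \<subseteq> module.span scale S"
proof -
  interpret K: vector_space scale by fact
  interpret Q: vector_space "qscale scale" by (rule vector_space_qscale) fact
  have "Q.subspace (K.span S)"
    unfolding Q.subspace_def qscale_def using K.span_zero K.span_add K.span_scale by blast
  then show ?thesis using Q.span_minimal K.span_superset by blast
qed

text \<open>Modular law: for x \<in> A \<subseteq> U3 written as a + b with a spanned by A and b \<in> U2, the
  component b = x - a lies in U2 \<inter> U3.\<close>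
lemma rel_rank_span_transfer:
  assumes "vector_space sc" and U12: "U1 \<subseteq> U2" and U2: "module.subspace sc U2"
    and U3: "module.subspace sc U3" and U23: "U2 \<inter> U3 \<subseteq> module.span sc U1"
    and A: "finite A" "A \<subseteq> U3"
  shows "rel_rank (module.span sc) A U2 = rel_rank (module.span sc) A U1"
proof -
  interpret vector_space sc by fact
  interpret pregeometry span by (rule pregeometry_span) fact
  obtain C where C: "C \<subseteq> A" "finite C" "card C = rel_rank span A U2" "A \<subseteq> span (C \<union> U2)"
    using rel_rank_basis[OF A(1)] by metis
  have "A \<subseteq> span (C \<union> U1)"
  proof
    fix x assume x: "x \<in> A"
    then obtain a b where ab: "x = a + b" "a \<in> span C" "b \<in> span U2"
      using C(4) unfolding span_Un by blast
    have "b \<in> U2" using ab(3) span_minimal[of U2 U2] U2 by blast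
    moreover have "a \<in> U3" using ab(2) C(1) A(2) U3 span_minimal by blast
    then have "x - a \<in> U3" using x A(2) subspace_diff[OF U3] by blast
    then have "b \<in> U3" using ab(1) by simp
    ultimately have "b \<in> span (C \<union> U1)" using U23 span_mono[of U1 "C \<union> U1"] by blast
    moreover have "a \<in> span (C \<union> U1)" using ab(2) span_mono[of C "C \<union> U1"] by blast
    ultimately show "x \<in> span (C \<union> U1)" using ab(1) span_add by blast
  qed
  then have "rel_rank span A U1 \<le> rel_rank span A U2" using rel_rank_le[OF C(1,2)] C(3) by simp
  then show ?thesis using rel_rank_antimono[OF U12 A(1)] by simp
qed

lemma subspace_setsum:
  assumes "vector_space sc" and U: "module.subspace sc U" and W: "module.subspace sc W"
  shows "module.subspace sc (setsum U W)"
proof -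
  interpret vector_space sc by fact
  show ?thesis
    unfolding setsum_def
  proof (rule subspaceI)
    show "0 \<in> {a + b |a b. a \<in> U \<and> b \<in> W}" using subspace_0[OF U] subspace_0[OF W] by force
    fix x assume "x \<in> {a + b |a b. a \<in> U \<and> b \<in> W}"
    then obtain a b where ab: "a \<in> U" "b \<in> W" "x = a + b" by blast
    show "sc c x \<in> {a + b |a b. a \<in> U \<and> b \<in> W}" for c
    proof -
      have "sc c x = sc c a + sc c b" using ab(3) by (simp add: scale_right_distrib)
      then show ?thesis using ab subspace_scale[OF U] subspace_scale[OF W] by blast
    qed
    fix y assume "y \<in> {a + b |a b. a \<in> U \<and> b \<in> W}"
    then obtain a' b' where ab': "a' \<in> U" "b' \<in> W" "y = a' + b'" by blast
    have "x + y = (a + a') + (b + b')" using ab ab' by (simp add: algebra_simps)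
    then show "x + y \<in> {a + b |a b. a \<in> U \<and> b \<in> W}"
      using ab ab' subspace_add[OF U] subspace_add[OF W] by blast
  qed
qed

section \<open>Exponentials on a Q-subspace\<close>

locale partial_exp = K: vector_space scale
  for scale :: "'k::field_char_0 \<Rightarrow> 'v::ab_group_add \<Rightarrow> 'v" +
  fixes ex :: "'v \<Rightarrow> 'f::field" and D :: "'v set"
  assumes subspace_D: "module.subspace (qscale scale) D"
    and ex_nonzero: "x \<in> D \<Longrightarrow> ex x \<noteq> 0"
    and ex_add: "x \<in> D \<Longrightarrow> y \<in> D \<Longrightarrow> ex (x + y) = ex x * ex y"
begin

interpretation Q: vector_space "qscale scale"
  by (rule vector_space_qscale) (rule K.vector_space_axioms)

lemma ex_zero: "ex 0 = 1"
  using ex_add[of 0 0] ex_nonzero[of 0] Q.subspace_0[OF subspace_D] by simp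

lemma ex_diff:
  assumes "x \<in> D" "y \<in> D"
  shows "ex (x - y) = ex x / ex y"
  using ex_add[of "x - y" y] ex_nonzero[of y] Q.subspace_diff[OF subspace_D] assms
  by (simp add: field_simps)

lemma ex_scale_nat: "x \<in> D \<Longrightarrow> ex (qscale scale (of_nat n) x) = ex x ^ n"
proof (induction n)
  case 0
  then show ?case using ex_zero by (simp add: qscale_def)
next
  case (Suc n)
  have "qscale scale (of_nat (Suc n)) x = qscale scale (of_nat n) x + x"
    using Q.scale_left_distrib[of "of_nat n" 1 x] by (simp add: add.commute)
  then show ?case
    using Suc ex_add[OF Q.subspace_scale[OF subspace_D Suc.prems] Suc.prems] by simp
qed

lemma ex_scale_int: "x \<in> D \<Longrightarrow> ex (qscale scale (of_int k) x) \<in> gen_field {ex x}"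
proof -
  assume x: "x \<in> D"
  have G: "subfield (gen_field {ex x})" and exG: "ex x \<in> gen_field {ex x}"
    using subfield_gen_field gen_field_superset by blast+
  show ?thesis
  proof (cases "k \<ge> 0")
    case True
    define m where "m = nat k"
    have "(of_int k :: rat) = of_nat m" using True unfolding m_def by simp
    then have "ex (qscale scale (of_int k) x) = ex x ^ m" by (simp add: ex_scale_nat[OF x])
    then show ?thesis using subfield_power[OF G exG] by simp
  next
    case False
    define m where "m = nat (- k)"
    have "(of_int k :: rat) = - of_nat m" using False unfolding m_def by simp
    then have "qscale scale (of_int k) x = - qscale scale (of_nat m) x" by (simp add: Q.scale_minus_left)
    moreover have "qscale scale (of_nat m) x \<in> D" by (rule Q.subspace_scale[OF subspace_D x])
    ultimately have "ex (qscale scale (of_int k) x) * ex x ^ m = 1"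
      using ex_add[of "- qscale scale (of_nat m) x" "qscale scale (of_nat m) x"] ex_zero
        Q.subspace_neg[OF subspace_D] ex_scale_nat[OF x] by simp
    then have "ex (qscale scale (of_int k) x) = inverse (ex x ^ m)"
      by (metis inverse_unique mult.commute)
    then show ?thesis using subfield_inverse[OF G] subfield_power[OF G exG] by simp
  qed
qed

text \<open>For x = (a/b) s + y the power ex(x)^(b N) is ex(a s)^N ex(y)^(b N), which reduces the
  claim to y; so by induction over the span, some power of ex x lies in the field generated
  by ex(S).\<close>
lemma ex_span_power:
  assumes SD: "S \<subseteq> D" and x: "x \<in> Q.span S"
  shows "\<exists>N>0. ex x ^ N \<in> gen_field (ex ` S)"
proof -
  let ?G = "gen_field (ex ` S)"
  have G: "subfield ?G" by (rule subfield_gen_field)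
  have "x \<in> D \<longrightarrow> (\<exists>N>0. ex x ^ N \<in> ?G)"
    using x
  proof (induction rule: Q.span_induct_alt)
    case base
    show ?case using ex_zero subfield_1[OF G] by (intro impI exI[of _ 1]) simp
  next
    case (step c s y)
    show ?case
    proof
      assume cy: "qscale scale c s + y \<in> D"
      have sD: "s \<in> D" using step(1) SD by blast
      have csD: "qscale scale c s \<in> D" by (rule Q.subspace_scale[OF subspace_D sD])
      have yD: "y \<in> D" using Q.subspace_diff[OF subspace_D cy csD] by simp
      obtain N where N: "N > 0" "ex y ^ N \<in> ?G" using step(2) yD by blast
      obtain a b where ab: "c = Rat.Fract a b" "b > 0" by (cases c) auto
      have "(of_nat (nat b) :: rat) * c = of_int a" using ab by (simp add: Fract_of_int_quotient)
      then have "ex (qscale scale c s) ^ nat b = ex (qscale scale (of_int a) s)"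
        using ex_scale_nat[OF csD, of "nat b"] by (simp add: Q.scale_scale)
      moreover have "gen_field {ex s} \<subseteq> ?G"
        using step(1) by (intro gen_field_mono) blast
      ultimately have cG: "ex (qscale scale c s) ^ nat b \<in> ?G" using ex_scale_int[OF sD, of a] by auto
      have "ex (qscale scale c s + y) ^ (nat b * N) = (ex (qscale scale c s) ^ nat b) ^ N * (ex y ^ N) ^ nat b"
        using ex_add[OF csD yD] by (simp add: power_mult_distrib flip: power_mult) (simp add: mult.commute)
      also have "\<dots> \<in> ?G" using cG N(2) by (simp add: subfield_power[OF G] subfield_mult[OF G])
      finally show "\<exists>N>0. ex (qscale scale c s + y) ^ N \<in> ?G"
        using N(1) ab(2) by (intro exI[of _ "nat b * N"]) simp
    qed
  qed
  moreover have "x \<in> D" using x SD subspace_D Q.span_minimal by blast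
  ultimately show ?thesis by blast
qed

lemma ex_span_in_acl:
  assumes SD: "S \<subseteq> D" and x: "x \<in> Q.span S"
  shows "ex x \<in> acl (ex ` S)"
proof -
  let ?G = "gen_field (ex ` S)"
  have G: "subfield ?G" by (rule subfield_gen_field)
  obtain N where N: "N > 0" "ex x ^ N \<in> ?G" using ex_span_power[OF SD x] by blast
  define P where "P = monom 1 N - [:ex x ^ N:]"
  have "coeff P N = 1" using N(1) unfolding P_def by (simp add: coeff_monom coeff_pCons split: nat.split)
  then have "P \<noteq> 0" by auto
  moreover have "poly_over ?G P"
    unfolding P_def poly_over_def using N(2) subfield_0[OF G] subfield_1[OF G] subfield_diff[OF G]
    by (auto simp: coeff_monom coeff_pCons split: nat.split)
  moreover have "poly P (ex x) = 0" unfolding P_def by (simp add: poly_monom)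
  ultimately show ?thesis unfolding acl_def algebraic_over_iff by blast
qed

end

section \<open>Predimension\<close>

lemma predim_eq_rel_rank:
  "predim scale ex A B = int (rel_rank (module.span scale) A B) + int (rel_rank acl (ex ` A) (ex ` B))
     - int (rel_rank (module.span (qscale scale)) A B)"
  by (simp add: predim_def ldim_eq_rel_rank tdeg_eq_rel_rank)

lemma predim_Un:
  assumes "vector_space scale" "finite A" "finite A'"
  shows "predim scale ex (A \<union> A') B = predim scale ex A B + predim scale ex A' (A \<union> B)"
proof -
  interpret K: pregeometry "module.span scale" by (rule pregeometry_span) fact
  interpret Q: pregeometry "module.span (qscale scale)"
    by (rule pregeometry_span, rule vector_space_qscale) fact
  interpret T: pregeometry acl by (rule pregeometry_acl)
  show ?thesis
    using K.rel_rank_Un Q.rel_rank_Un T.rel_rank_Un[of "ex ` A" "ex ` A'"] assms(2,3)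
    by (simp add: predim_eq_rel_rank image_Un)
qed

context partial_exp
begin

lemma rel_ranks_span_cong:
  assumes A: "finite A" "finite A'" and D: "A \<union> A' \<union> B \<subseteq> D"
    and span: "A \<subseteq> module.span (qscale scale) (A' \<union> B)" "A' \<subseteq> module.span (qscale scale) (A \<union> B)"
  shows "rel_rank (module.span scale) A B = rel_rank (module.span scale) A' B"
    and "rel_rank (module.span (qscale scale)) A B = rel_rank (module.span (qscale scale)) A' B"
    and "rel_rank acl (ex ` A) (ex ` B) = rel_rank acl (ex ` A') (ex ` B)"
proof -
  interpret K_rank: pregeometry "module.span scale" by (rule pregeometry_span) (rule K.vector_space_axioms)
  interpret Q_rank: pregeometry "module.span (qscale scale)"
    by (rule pregeometry_span, rule vector_space_qscale) (rule K.vector_space_axioms)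
  interpret T_rank: pregeometry acl by (rule pregeometry_acl)
  show "rel_rank (module.span scale) A B = rel_rank (module.span scale) A' B"
    using span span_qscale_subset[OF K.vector_space_axioms] by (intro K_rank.rel_rank_cong A) blast+
  show "rel_rank (module.span (qscale scale)) A B = rel_rank (module.span (qscale scale)) A' B"
    using span by (intro Q_rank.rel_rank_cong A)
  have "A' \<union> B \<subseteq> D" "A \<union> B \<subseteq> D" using D by auto
  then have "ex ` A \<subseteq> acl (ex ` (A' \<union> B))" "ex ` A' \<subseteq> acl (ex ` (A \<union> B))"
    using span ex_span_in_acl by blast+
  then show "rel_rank acl (ex ` A) (ex ` B) = rel_rank acl (ex ` A') (ex ` B)"
    using A by (intro T_rank.rel_rank_cong) (auto simp: image_Un)
qed

lemma predim_span_cong: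
  assumes "finite A" "finite A'" "A \<union> A' \<union> B \<subseteq> D"
    and "A \<subseteq> module.span (qscale scale) (A' \<union> B)" "A' \<subseteq> module.span (qscale scale) (A \<union> B)"
  shows "predim scale ex A B = predim scale ex A' B"
  using rel_ranks_span_cong[OF assms] by (simp add: predim_eq_rel_rank)

end


section \<open>Free amalgams over a full K-powered field\<close>

lemma partial_exp_if_pkpf:
  assumes "vector_space scale" "pkpf scale ex V D F"
  shows "partial_exp scale ex D"
  using assms unfolding pkpf_def partial_exp_def partial_exp_axioms_def by auto

lemma strong_ext_predim_nonneg:
  assumes "strong_ext scale ex V1 D1 F1 V2 D2 F2" "finite Z" "Z \<subseteq> D2"
  shows "predim scale ex Z D1 \<ge> 0"
  using assms finite_list unfolding strong_ext_def by metis

lemma powers_algebraic_ext_closure: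
  assumes "powers_algebraic_ext scale ex V1 D1 F1 V2 D2 F2" "finite Z" "Z \<subseteq> D2"
  obtains W where "finite W" "Z \<subseteq> W" "W \<subseteq> D2" "predim scale ex W D1 = 0"
proof -
  obtain z where z: "set z = Z" using finite_list assms(2) by blast
  then obtain w where "set w \<subseteq> D2" "predim scale ex (set (z @ w)) D1 = 0"
    using assms(1,3) unfolding powers_algebraic_ext_def by blast
  then show thesis using that[of "set (z @ w)"] z assms(3) by auto
qed

lemma powers_algebraic_extI:
  fixes scale :: "'k::field_char_0 \<Rightarrow> 'v::ab_group_add \<Rightarrow> 'v"
  assumes "kpf_ext scale ex V1 D1 F1 V2 D2 F2" "kernel_preserving ex D1 D2"
    and "\<And>Z. finite Z \<Longrightarrow> Z \<subseteq> D2 \<Longrightarrow> predim scale ex Z D1 \<ge> 0"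
    and "\<And>Z. finite Z \<Longrightarrow> Z \<subseteq> D2 \<Longrightarrow>
      \<exists>W. finite W \<and> Z \<subseteq> W \<and> W \<subseteq> D2 \<and> predim scale ex W D1 = 0"
  shows "powers_algebraic_ext scale ex V1 D1 F1 V2 D2 F2"
  unfolding powers_algebraic_ext_def strong_ext_def
proof (intro conjI allI impI)
  fix z :: "'v list" assume z: "set z \<subseteq> D2"
  then show "predim scale ex (set z) D1 \<ge> 0" using assms(3) by simp
  obtain W where W: "finite W" "set z \<subseteq> W" "W \<subseteq> D2" "predim scale ex W D1 = 0"
    using assms(4)[OF finite_set z] by blast
  obtain w where w: "set w = W" using finite_list[OF W(1)] by blast
  then have "set (z @ w) = W" using W(2) by auto
  then show "\<exists>w. set w \<subseteq> D2 \<and> predim scale ex (set (z @ w)) D1 = 0"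
    using W w by (intro exI[of _ w]) auto
qed (use assms(1,2) in auto)

locale free_amalgam_over_full =
  fixes scale :: "'k::field_char_0 \<Rightarrow> 'v::ab_group_add \<Rightarrow> 'v" and ex :: "'v \<Rightarrow> 'f::field_char_0"
    and V1 D1 F1 V2 D2 F2 V3 D3 F3 V4 D4 F4
  assumes vector_space: "vector_space scale"
    and full: "full_kpf scale ex V1 D1 F1"
    and ext2: "powers_algebraic_ext scale ex V1 D1 F1 V2 D2 F2"
    and ext3: "powers_algebraic_ext scale ex V1 D1 F1 V3 D3 F3"
    and amalgam: "free_amalgam scale ex V1 D1 F1 V2 D2 F2 V3 D3 F3 V4 D4 F4"
begin

interpretation K: vector_space scale by (rule vector_space)
interpretation Q: vector_space "qscale scale" by (rule vector_space_qscale[OF vector_space])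
interpretation K_rank: pregeometry K.span by (rule pregeometry_span[OF vector_space])
interpretation Q_rank: pregeometry Q.span
  by (rule pregeometry_span[OF vector_space_qscale[OF vector_space]])
interpretation T_rank: pregeometry acl by (rule pregeometry_acl)

lemma
  shows pkpf1: "pkpf scale ex V1 D1 F1" and D1_eq_V1: "D1 = V1" and ex_D1: "ex ` D1 = F1 - {0}"
  using full unfolding full_kpf_def by auto

lemma
  shows pkpf2: "pkpf scale ex V2 D2 F2" and V1_V2: "V1 \<subseteq> V2" and D1_D2: "D1 \<subseteq> D2"
    and F1_F2: "F1 \<subseteq> F2" and kernel2: "kernel_preserving ex D1 D2"
    and strong2: "strong_ext scale ex V1 D1 F1 V2 D2 F2"
  using ext2 unfolding powers_algebraic_ext_def strong_ext_def kpf_ext_def by auto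

lemma
  shows pkpf3: "pkpf scale ex V3 D3 F3" and D1_D3: "D1 \<subseteq> D3"
    and F1_F3: "F1 \<subseteq> F3" and kernel3: "kernel_preserving ex D1 D3"
    and strong3: "strong_ext scale ex V1 D1 F1 V3 D3 F3"
  using ext3 unfolding powers_algebraic_ext_def strong_ext_def kpf_ext_def by auto

lemma
  shows V2_Int_V3: "V2 \<inter> V3 = V1" and V4_eq: "V4 = setsum V2 V3" and D4_eq: "D4 = setsum D2 D3"
    and lin_disjoint: "linearly_disjoint F1 F2 F3" and F4_eq: "F4 = gen_field (F2 \<union> F3)"
    and ex_sum: "\<And>z2 z3. z2 \<in> D2 \<Longrightarrow> z3 \<in> D3 \<Longrightarrow> ex (z2 + z3) = ex z2 * ex z3"
  using amalgam unfolding free_amalgam_def by auto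

lemma
  shows subspace_D1: "Q.subspace D1" and subfield_F1: "subfield F1"
    and subspace_V2: "K.subspace V2" and D2_V2: "D2 \<subseteq> V2" and span_D2: "K.span D2 = V2"
    and subfield_F2: "subfield F2" and ex_D2: "ex ` D2 \<subseteq> F2" and gen_field_ex_D2: "gen_field (ex ` D2) = F2"
    and subspace_V3: "K.subspace V3" and D3_V3: "D3 \<subseteq> V3" and span_D3: "K.span D3 = V3"
    and subfield_F3: "subfield F3" and ex_D3: "ex ` D3 \<subseteq> F3" and gen_field_ex_D3: "gen_field (ex ` D3) = F3"
  using pkpf1 pkpf2 pkpf3 unfolding pkpf_def by auto

interpretation Exp2: partial_exp scale ex D2 by (rule partial_exp_if_pkpf[OF vector_space pkpf2])
interpretation Exp3: partial_exp scale ex D3 by (rule partial_exp_if_pkpf[OF vector_space pkpf3])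

lemma D4E:
  assumes "x \<in> D4"
  obtains a b where "a \<in> D2" "b \<in> D3" "x = a + b" "ex x = ex a * ex b"
  using assms ex_sum unfolding D4_eq setsum_def by blast

lemma D2_D4: "D2 \<subseteq> D4" and D3_D4: "D3 \<subseteq> D4"
  unfolding D4_eq setsum_def using Q.subspace_0[OF Exp2.subspace_D] Q.subspace_0[OF Exp3.subspace_D]
  by force+

lemma F2_F4: "F2 \<subseteq> F4" and F3_F4: "F3 \<subseteq> F4" and subfield_F4: "subfield F4"
  unfolding F4_eq using gen_field_superset[of "F2 \<union> F3"] subfield_gen_field by blast+

lemma span_D4: "K.span D4 = V4"
proof
  have "D4 \<subseteq> V4" using D2_V2 D3_V3 unfolding D4_eq V4_eq setsum_def by blast
  moreover have "K.subspace V4" unfolding V4_eq by (rule subspace_setsum[OF vector_space subspace_V2 subspace_V3])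
  ultimately show "K.span D4 \<subseteq> V4" using K.span_minimal by blast
  show "V4 \<subseteq> K.span D4"
  proof
    fix x assume "x \<in> V4"
    then obtain a b where ab: "a \<in> V2" "b \<in> V3" "x = a + b" unfolding V4_eq setsum_def by blast
    have "a \<in> K.span D4" "b \<in> K.span D4"
      using ab(1,2) span_D2 span_D3 K.span_mono[OF D2_D4] K.span_mono[OF D3_D4] by blast+
    then show "x \<in> K.span D4" using ab(3) K.span_add by blast
  qed
qed

lemma gen_field_ex_D4: "gen_field (ex ` D4) = F4"
proof
  have "ex x \<in> F4" if x: "x \<in> D4" for x
  proof -
    obtain a b where ab: "a \<in> D2" "b \<in> D3" "ex x = ex a * ex b" using D4E[OF x] by blast
    then have "ex a \<in> F4" "ex b \<in> F4" using ex_D2 ex_D3 F2_F4 F3_F4 by auto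
    then show ?thesis using ab(3) subfield_mult[OF subfield_F4] by simp
  qed
  then show "gen_field (ex ` D4) \<subseteq> F4" using gen_field_least[OF subfield_F4] by blast
  have "F2 \<union> F3 \<subseteq> gen_field (ex ` D4)"
    using gen_field_mono[OF image_mono[OF D2_D4, of ex]] gen_field_mono[OF image_mono[OF D3_D4, of ex]]
    unfolding gen_field_ex_D2 gen_field_ex_D3 by blast
  then show "F4 \<subseteq> gen_field (ex ` D4)" unfolding F4_eq by (rule gen_field_least[OF subfield_gen_field])
qed

lemma pkpf4: "pkpf scale ex V4 D4 F4"
  unfolding pkpf_def
proof (intro conjI ballI)
  show "K.subspace V4" unfolding V4_eq by (rule subspace_setsum[OF vector_space subspace_V2 subspace_V3])
  show "D4 \<subseteq> V4" using D2_V2 D3_V3 unfolding V4_eq D4_eq setsum_def by blast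
  show "Q.subspace D4"
    unfolding D4_eq by (rule subspace_setsum[OF vector_space_qscale[OF vector_space] Exp2.subspace_D Exp3.subspace_D])
  fix x assume x: "x \<in> D4"
  show "ex x \<in> F4" using x gen_field_ex_D4 gen_field_superset[of "ex ` D4"] by blast
  obtain a b where ab: "a \<in> D2" "b \<in> D3" "x = a + b" "ex x = ex a * ex b" using D4E[OF x] .
  show "ex x \<noteq> 0" using ab Exp2.ex_nonzero Exp3.ex_nonzero by simp
  fix y assume y: "y \<in> D4"
  obtain a' b' where ab': "a' \<in> D2" "b' \<in> D3" "y = a' + b'" "ex y = ex a' * ex b'" using D4E[OF y] .
  have "x + y = (a + a') + (b + b')" using ab ab' by (simp add: algebra_simps)
  moreover have "a + a' \<in> D2" "b + b' \<in> D3"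
    using ab ab' Q.subspace_add[OF Exp2.subspace_D] Q.subspace_add[OF Exp3.subspace_D] by auto
  ultimately have "ex (x + y) = ex (a + a') * ex (b + b')" using ex_sum by simp
  then show "ex (x + y) = ex x * ex y" using ab ab' Exp2.ex_add Exp3.ex_add by (simp add: mult_ac)
qed (simp_all add: span_D4 subfield_F4 gen_field_ex_D4)

text \<open>If ex (a + b) = 1 then ex a = 1 / ex b lies in F2 \<inter> F3 \<subseteq> F1 = ex(D1) \<union> {0}; so a and b
  differ from elements of D1 by kernel elements of D2 and D3, which lie in D1.\<close>
lemma kernel_preserving_D4: "kernel_preserving ex D1 D4"
  unfolding kernel_preserving_def
proof (intro subsetI, elim CollectE conjE)
  fix x assume x: "x \<in> D4" "ex x = 1"
  obtain a b where ab: "a \<in> D2" "b \<in> D3" "x = a + b" "ex x = ex a * ex b" using D4E[OF x(1)] .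
  have prod1: "ex a * ex b = 1" using x(2) ab(4) by simp
  then have "ex a = inverse (ex b)" by (metis inverse_unique mult.commute)
  then have "ex a \<in> F2 \<inter> F3" using ab(1,2) ex_D2 ex_D3 subfield_inverse[OF subfield_F3] by auto
  then have "ex a \<in> F1 - {0}"
    using linearly_disjoint_Int[OF subfield_F1 subfield_F2 subfield_F3 lin_disjoint] Exp2.ex_nonzero[OF ab(1)]
    by blast
  then obtain d where d: "d \<in> D1" "ex d = ex a" using ex_D1 by (metis imageE)
  have d2: "d \<in> D2" and d3: "d \<in> D3" using d(1) D1_D2 D1_D3 by auto
  have "a - d \<in> D2" "ex (a - d) = 1"
    using Q.subspace_diff[OF Exp2.subspace_D ab(1) d2] Exp2.ex_diff[OF ab(1) d2] d(2) Exp2.ex_nonzero[OF ab(1)]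
    by auto
  then have "a - d \<in> D1" using kernel2 unfolding kernel_preserving_def by blast
  then have aD1: "a \<in> D1" using Q.subspace_add[OF subspace_D1 _ d(1), of "a - d"] by simp
  have "b + d \<in> D3" "ex (b + d) = 1"
    using Q.subspace_add[OF Exp3.subspace_D ab(2) d3] Exp3.ex_add[OF ab(2) d3] d(2) prod1
    by (auto simp: mult.commute)
  then have "b + d \<in> D1" using kernel3 unfolding kernel_preserving_def by blast
  then have "b \<in> D1" using Q.subspace_diff[OF subspace_D1 _ d(1), of "b + d"] by simp
  then show "x \<in> D1" using ab(3) aD1 Q.subspace_add[OF subspace_D1] by simp
qed

interpretation Exp4: partial_exp scale ex D4 by (rule partial_exp_if_pkpf[OF vector_space pkpf4])

lemma D4_decomposition:
  assumes "Z \<subseteq> D4"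
  obtains e where "\<And>z. z \<in> Z \<Longrightarrow> e z \<in> D3" "\<And>z. z \<in> Z \<Longrightarrow> z - e z \<in> D2"
proof -
  have "\<forall>z\<in>Z. \<exists>b. b \<in> D3 \<and> z - b \<in> D2"
  proof
    fix z assume "z \<in> Z"
    then obtain a b where "a \<in> D2" "b \<in> D3" "z = a + b" using assms D4E by blast
    then show "\<exists>b. b \<in> D3 \<and> z - b \<in> D2" by (intro exI[of _ b]) simp
  qed
  then obtain e where "\<forall>z\<in>Z. e z \<in> D3 \<and> z - e z \<in> D2" by (rule bchoice[THEN exE])
  then show thesis using that by blast
qed

lemma V1_V4: "V1 \<subseteq> V4"
  unfolding V4_eq setsum_def using V1_V2 K.subspace_0[OF subspace_V3] by force

lemma D2_Int_D3: "D2 \<inter> D3 \<subseteq> D1"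
  using D2_V2 D3_V3 V2_Int_V3 D1_eq_V1 by blast

text \<open>An element of F3 algebraic over F2 and finitely many elements C of F3 is algebraic over
  C and F1 already, by linear disjointness.\<close>
lemma rel_rank_acl_F3_over_D2:
  assumes S: "finite S" "S \<subseteq> F3"
  shows "rel_rank acl S (ex ` D2) = rel_rank acl S (ex ` D1)"
proof -
  obtain C where C: "C \<subseteq> S" "finite C" "card C = rel_rank acl S (ex ` D2)"
    "S \<subseteq> acl (C \<union> ex ` D2)"
    using T_rank.rel_rank_basis[OF S(1)] by metis
  define E where "E = gen_field (C \<union> ex ` D1)"
  have E: "subfield E" unfolding E_def by (rule subfield_gen_field)
  have F1E: "F1 \<subseteq> E"
    unfolding E_def using pkpf1 gen_field_mono[of "ex ` D1" "C \<union> ex ` D1"] by (auto simp: pkpf_def)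
  have "C \<union> ex ` D1 \<subseteq> F3" using C(1) S(2) ex_D1 F1_F3 by blast
  then have EF3: "E \<subseteq> F3" unfolding E_def by (rule gen_field_least[OF subfield_F3])
  have "S \<subseteq> acl (C \<union> ex ` D1)"
  proof
    fix s assume s: "s \<in> S"
    have "C \<union> ex ` D2 \<subseteq> F2 \<union> E"
      using ex_D2 gen_field_superset[of "C \<union> ex ` D1"] unfolding E_def by blast
    moreover have "algebraic_over (gen_field (C \<union> ex ` D2)) s" using C(4) s unfolding acl_def by blast
    ultimately have "algebraic_over (gen_field (F2 \<union> E)) s"
      using algebraic_over_mono[OF gen_field_mono] by blast
    then have "algebraic_over E s"
      using linearly_disjoint_algebraic_over[OF subfield_F1 subfield_F2 E subfield_F3 F1E EF3 lin_disjoint]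
        s S(2) by blast
    then show "s \<in> acl (C \<union> ex ` D1)" unfolding acl_def E_def by simp
  qed
  then have "rel_rank acl S (ex ` D1) \<le> rel_rank acl S (ex ` D2)"
    using T_rank.rel_rank_le[OF C(1,2)] C(3) by simp
  then show ?thesis using T_rank.rel_rank_antimono[OF image_mono[OF D1_D2, of ex] S(1)] by simp
qed

lemma rel_ranks_D3_over_D2:
  assumes W: "finite W" "W \<subseteq> D3" and B: "D1 \<subseteq> B" "B \<subseteq> D2"
  shows "rel_rank K.span W B = rel_rank K.span W D1"
    and "rel_rank Q.span W B = rel_rank Q.span W D1"
    and "rel_rank acl (ex ` W) (ex ` B) = rel_rank acl (ex ` W) (ex ` D1)"
proof -
  have "rel_rank K.span W V2 = rel_rank K.span W D1"
    using rel_rank_span_transfer[OF vector_space _ subspace_V2 subspace_V3 _ W(1)] W(2) D3_V3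
      V1_V2 V2_Int_V3 K.span_superset D1_eq_V1 by auto
  moreover have "B \<subseteq> V2" using B(2) D2_V2 by blast
  ultimately show "rel_rank K.span W B = rel_rank K.span W D1"
    using K_rank.rel_rank_between[OF B(1) _ W(1)] by blast
  have "rel_rank Q.span W D2 = rel_rank Q.span W D1"
    using rel_rank_span_transfer[OF vector_space_qscale[OF vector_space] D1_D2 Exp2.subspace_D
        Exp3.subspace_D _ W] D2_Int_D3 Q.span_superset by blast
  then show "rel_rank Q.span W B = rel_rank Q.span W D1"
    by (rule Q_rank.rel_rank_between[OF B W(1)])
  have "rel_rank acl (ex ` W) (ex ` D2) = rel_rank acl (ex ` W) (ex ` D1)"
    using rel_rank_acl_F3_over_D2 W ex_D3 by auto
  then show "rel_rank acl (ex ` W) (ex ` B) = rel_rank acl (ex ` W) (ex ` D1)"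
    by (rule T_rank.rel_rank_between[OF image_mono[OF B(1)] image_mono[OF B(2)] finite_imageI[OF W(1)]])
qed

lemma predim_D3_over_D2:
  assumes "finite W" "W \<subseteq> D3" "D1 \<subseteq> B" "B \<subseteq> D2"
  shows "predim scale ex W B = predim scale ex W D1"
  using rel_ranks_D3_over_D2[OF assms] by (simp add: predim_eq_rel_rank)

text \<open>Passing from B to D2 can only lower the K-rank and the acl-rank of Z and, by the closedness
  hypothesis, keeps its Q-rank; over D2 the set Z may then be replaced by its D3-components.\<close>
lemma predim_D3_components_le:
  assumes Z: "finite Z" and e: "\<And>z. z \<in> Z \<Longrightarrow> e z \<in> D3" "\<And>z. z \<in> Z \<Longrightarrow> z - e z \<in> D2"
    and B: "B \<subseteq> D2" and closed: "D2 \<inter> Q.span (Z \<union> B) \<subseteq> Q.span B"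
  shows "predim scale ex (e ` Z) D1 \<le> predim scale ex Z B"
proof -
  let ?E = "e ` Z"
  have E: "finite ?E" "?E \<subseteq> D3" using Z e(1) by auto
  have "z \<in> D4" if "z \<in> Z" for z
    using Q.subspace_add[OF Exp4.subspace_D, of "z - e z" "e z"] e[OF that] D2_D4 D3_D4 by auto
  then have D: "Z \<union> ?E \<union> D2 \<subseteq> D4" using E(2) D2_D4 D3_D4 by blast
  have "z \<in> Q.span (?E \<union> D2)" "e z \<in> Q.span (Z \<union> D2)" if "z \<in> Z" for z
    using Q.span_add[of "e z" _ "z - e z"] Q.span_diff[of z _ "z - e z"] e[OF that] that
      Q.span_base[of _ "?E \<union> D2"] Q.span_base[of _ "Z \<union> D2"] by auto
  then have cong: "rel_rank K.span Z D2 = rel_rank K.span ?E D2"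
    "rel_rank Q.span Z D2 = rel_rank Q.span ?E D2"
    "rel_rank acl (ex ` Z) (ex ` D2) = rel_rank acl (ex ` ?E) (ex ` D2)"
    using Exp4.rel_ranks_span_cong[OF Z E(1) D] by blast+
  have "Z \<subseteq> Q.span (Z \<union> B)" using Q.span_superset[of "Z \<union> B"] by blast
  then have "rel_rank Q.span Z B = rel_rank Q.span Z D2"
    using rel_rank_span_transfer[OF vector_space_qscale[OF vector_space] B Exp2.subspace_D
        Q.subspace_span closed Z] by simp
  moreover have "rel_rank K.span Z D2 \<le> rel_rank K.span Z B"
    "rel_rank acl (ex ` Z) (ex ` D2) \<le> rel_rank acl (ex ` Z) (ex ` B)"
    using K_rank.rel_rank_antimono[OF B Z] T_rank.rel_rank_antimono[OF image_mono[OF B] finite_imageI[OF Z]]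
    by auto
  moreover note rel_ranks_D3_over_D2[OF E D1_D2 order_refl]
  ultimately show ?thesis using cong by (simp add: predim_eq_rel_rank)
qed

text \<open>Choose a finite x2 \<subseteq> D2 spanning D2 \<inter> Q.span (Z \<union> D1) over D1 and split
  \<delta>(Z/D1) = \<delta>(x2/D1) + \<delta>(Z/x2 \<union> D1); the first summand is nonnegative because D1 \<triangleleft> D2, the
  second dominates the predimension of the D3-components of Z, which is nonnegative because
  D1 \<triangleleft> D3.\<close>
lemma predim_D4_nonneg:
  assumes Z: "finite Z" "Z \<subseteq> D4"
  shows "predim scale ex Z D1 \<ge> 0"
proof -
  obtain e where e: "\<And>z. z \<in> Z \<Longrightarrow> e z \<in> D3" "\<And>z. z \<in> Z \<Longrightarrow> z - e z \<in> D2"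
    using D4_decomposition[OF Z(2)] by blast
  obtain x2 where x2: "finite x2" "x2 \<subseteq> D2 \<inter> Q.span (Z \<union> D1)"
    "D2 \<inter> Q.span (Z \<union> D1) \<subseteq> Q.span (x2 \<union> D1)"
    using Q_rank.finite_spanning_subset[OF Z(1), of "D2 \<inter> Q.span (Z \<union> D1)" D1] by blast
  have "Q.span (Z \<union> (x2 \<union> D1)) \<subseteq> Q.span (Z \<union> D1)"
    using x2(2) Q.span_superset[of "Z \<union> D1"] by (intro Q.span_minimal) auto
  then have closed: "D2 \<inter> Q.span (Z \<union> (x2 \<union> D1)) \<subseteq> Q.span (x2 \<union> D1)" using x2(3) by blast
  have "predim scale ex Z D1 = predim scale ex (x2 \<union> Z) D1"
    using x2 Z D1_D2 D2_D4 Q.span_superset[of "Z \<union> D1"] Q.span_superset[of "x2 \<union> Z \<union> D1"]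
    by (intro Exp4.predim_span_cong) auto
  also have "\<dots> = predim scale ex x2 D1 + predim scale ex Z (x2 \<union> D1)"
    by (rule predim_Un[OF vector_space x2(1) Z(1)])
  finally have "predim scale ex Z D1 = predim scale ex x2 D1 + predim scale ex Z (x2 \<union> D1)" .
  moreover have "predim scale ex x2 D1 \<ge> 0" using strong_ext_predim_nonneg[OF strong2 x2(1)] x2(2) by blast
  moreover have "predim scale ex (e ` Z) D1 \<ge> 0" using strong_ext_predim_nonneg[OF strong3] Z(1) e(1) by blast
  moreover have "predim scale ex (e ` Z) D1 \<le> predim scale ex Z (x2 \<union> D1)"
    using x2(2) D1_D2 by (intro predim_D3_components_le[OF Z(1) e _ closed]) auto
  ultimately show ?thesis by linarith
qed

lemma predim_D4_zero_superset:
  assumes Z: "finite Z" "Z \<subseteq> D4"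
  shows "\<exists>W. finite W \<and> Z \<subseteq> W \<and> W \<subseteq> D4 \<and> predim scale ex W D1 = 0"
proof -
  obtain e where e: "\<And>z. z \<in> Z \<Longrightarrow> e z \<in> D3" "\<And>z. z \<in> Z \<Longrightarrow> z - e z \<in> D2"
    using D4_decomposition[OF Z(2)] by blast
  obtain W2 where W2: "finite W2" "(\<lambda>z. z - e z) ` Z \<subseteq> W2" "W2 \<subseteq> D2" "predim scale ex W2 D1 = 0"
    using powers_algebraic_ext_closure[OF ext2, of "(\<lambda>z. z - e z) ` Z"] Z(1) e(2) by blast
  obtain W3 where W3: "finite W3" "e ` Z \<subseteq> W3" "W3 \<subseteq> D3" "predim scale ex W3 D1 = 0"
    using powers_algebraic_ext_closure[OF ext3, of "e ` Z"] Z(1) e(1) by blast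
  have "z \<in> Q.span (W2 \<union> W3 \<union> D1)" if "z \<in> Z" for z
    using Q.span_add[of "z - e z" _ "e z"] W2(2) W3(2) that Q.span_base[of _ "W2 \<union> W3 \<union> D1"] by auto
  then have "predim scale ex (W2 \<union> W3 \<union> Z) D1 = predim scale ex (W2 \<union> W3) D1"
    using W2 W3 Z D1_D2 D2_D4 D3_D4 Q.span_superset[of "W2 \<union> W3 \<union> Z \<union> D1"]
      Q.span_superset[of "W2 \<union> W3 \<union> D1"]
    by (intro Exp4.predim_span_cong) auto
  also have "\<dots> = predim scale ex W2 D1 + predim scale ex W3 (W2 \<union> D1)"
    by (rule predim_Un[OF vector_space W2(1) W3(1)])
  also have "\<dots> = 0"
    using predim_D3_over_D2[OF W3(1,3), of "W2 \<union> D1"] W2(3,4) W3(4) D1_D2 by simp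
  finally show ?thesis using W2 W3 Z D2_D4 D3_D4 by (intro exI[of _ "W2 \<union> W3 \<union> Z"]) auto
qed

end

theorem proposition5p7:
  fixes scale :: "'k::field_char_0 \<Rightarrow> 'v::ab_group_add \<Rightarrow> 'v"
    and ex :: "'v \<Rightarrow> 'f::field_char_0"
  assumes "vector_space scale"
    and "full_kpf scale ex V1 D1 F1"
    and "powers_algebraic_ext scale ex V1 D1 F1 V2 D2 F2"
    and "powers_algebraic_ext scale ex V1 D1 F1 V3 D3 F3"
    and "free_amalgam scale ex V1 D1 F1 V2 D2 F2 V3 D3 F3 V4 D4 F4"
  shows "powers_algebraic_ext scale ex V1 D1 F1 V4 D4 F4"
proof -
  interpret free_amalgam_over_full scale ex V1 D1 F1 V2 D2 F2 V3 D3 F3 V4 D4 F4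
    using assms by (rule free_amalgam_over_full.intro)
  have "kpf_ext scale ex V1 D1 F1 V4 D4 F4"
    unfolding kpf_ext_def using pkpf1 pkpf4 V1_V4 D1_D2 D2_D4 F1_F2 F2_F4 by blast
  then show ?thesis
    using kernel_preserving_D4 predim_D4_nonneg predim_D4_zero_superset by (rule powers_algebraic_extI)
qed

end
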